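(* Let $(G,\mathcal{P})$ be a group pair and let $S$ be a finite generating set of $G$. Then $(G,\mathcal{P})$ is relatively finitely presented if and only if the coned-off Cayley graph $\hat\Gamma(G,\mathcal{P},S)$ is coarsely unicone simply-connected.
   Context: A group pair $(G,\mathcal{P})$: $G$ finitely generated, $\mathcal{P}$ a non-empty finite collection of subgroups (repetitions allowed); $G/\mathcal{P}=\coprod_{P\in\mathcal{P}}G/P$. For $S'\subseteq G$ let $\varphi\colon F(S')*\mathop{\ast}_{P\in\mathcal{P}}P\to G$ be induced by inclusions; $(G,\mathcal{P})$ is relatively finitely presented if there exist finite $S'$ with $\varphi$ surjective and a finite subset $R$ of the free product normally generating $\ker\varphi$. The coned-off Cayley graph $\hat\Gamma(G,\mathcal{P},S)$ has vertex set $G\sqcup G/\mathcal{P}$, edges $\{g,g'\}$ for $g^{-1}g'\in S$, and edges $\{g,A\}$ for $g\in G$, $A\in G/\mathcal{P}$ with $g\in A$. Vertices in $G/\mathcal{P}$ are cone vertices. An edge loop of length $l$ is a sequence of vertices $v_1,\dots,v_l$ with $\{v_i,v_{i+1}\}$ and $\{v_l,v_1\}$ edges; it is unicone if it contains at most one cone vertex. $\hat\Gamma_l$ is the 2-complex obtained from $\hat\Gamma(G,\mathcal{P},S)$ by attaching a 2-cell along each unicone loop of length $<l$. The graph is coarsely unicone simply-connected if $\hat\Gamma_l$ is simply-connected for some $l\in\mathbb{N}$. *)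

theory Defs
  imports "HOL-Algebra.Algebra"
begin

text \<open>A group pair is given by a group G and a finite non-empty index set I with
  subgroups P i (i in I); repetitions are allowed since the family is indexed.
  Elements of the free product F(S') * (free product over i in I of P i) are represented
  by words over letters: Inl (s, True) is the free generator s, Inl (s, False) its
  formal inverse, and Inr (i, p) is the element p of the i-th factor P i.\<close>

type_synonym ('a, 'i) fp_letter = "('a \<times> bool) + ('i \<times> 'a)"

definition fp_word :: "'a set \<Rightarrow> 'i set \<Rightarrow> ('i \<Rightarrow> 'a set) \<Rightarrow> ('a, 'i) fp_letter list \<Rightarrow> bool" where
  "fp_word S' I P w \<longleftrightarrow>
     (\<forall>x \<in> set w. case x of Inl (s, b) \<Rightarrow> s \<in> S' | Inr (i, p) \<Rightarrow> i \<in> I \<and> p \<in> P i)"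

fun fp_letter_inv :: "('a, 'b) monoid_scheme \<Rightarrow> ('a, 'i) fp_letter \<Rightarrow> ('a, 'i) fp_letter" where
  "fp_letter_inv G (Inl (s, b)) = Inl (s, \<not> b)"
| "fp_letter_inv G (Inr (i, p)) = Inr (i, inv\<^bsub>G\<^esub> p)"

definition fp_word_inv :: "('a, 'b) monoid_scheme \<Rightarrow> ('a, 'i) fp_letter list \<Rightarrow> ('a, 'i) fp_letter list" where
  "fp_word_inv G w = rev (map (fp_letter_inv G) w)"

inductive fp_step :: "('a, 'b) monoid_scheme \<Rightarrow> ('a, 'i) fp_letter list \<Rightarrow> ('a, 'i) fp_letter list \<Rightarrow> bool"
  for G where
  cancel: "fp_step G (u @ [Inl (s, b), Inl (s, \<not> b)] @ v) (u @ v)"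
| merge: "fp_step G (u @ [Inr (i, p), Inr (i, q)] @ v) (u @ [Inr (i, p \<otimes>\<^bsub>G\<^esub> q)] @ v)"
| unit: "fp_step G (u @ [Inr (i, \<one>\<^bsub>G\<^esub>)] @ v) (u @ v)"

text \<open>Equality in the free product F(S') * (*_i P i): equivalence on words over S', I, P generated by the elementary relations.\<close>
definition fp_equiv :: "('a, 'b) monoid_scheme \<Rightarrow> 'a set \<Rightarrow> 'i set \<Rightarrow> ('i \<Rightarrow> 'a set)
    \<Rightarrow> ('a, 'i) fp_letter list \<Rightarrow> ('a, 'i) fp_letter list \<Rightarrow> bool" where
  "fp_equiv G S' I P =
     (symclp (\<lambda>u v. fp_word S' I P u \<and> fp_word S' I P v \<and> fp_step G u v))\<^sup>*\<^sup>*"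

inductive_set fp_normal_closure ::
  "('a, 'b) monoid_scheme \<Rightarrow> 'a set \<Rightarrow> 'i set \<Rightarrow> ('i \<Rightarrow> 'a set) \<Rightarrow> ('a, 'i) fp_letter list set
     \<Rightarrow> ('a, 'i) fp_letter list set"
  for G S' I P R where
  empty: "[] \<in> fp_normal_closure G S' I P R"
| conj: "\<lbrakk>w \<in> fp_normal_closure G S' I P R; r \<in> R; fp_word S' I P u\<rbrakk>
          \<Longrightarrow> u @ r @ fp_word_inv G u @ w \<in> fp_normal_closure G S' I P R"
| conj_inv: "\<lbrakk>w \<in> fp_normal_closure G S' I P R; r \<in> R; fp_word S' I P u\<rbrakk>
          \<Longrightarrow> u @ fp_word_inv G r @ fp_word_inv G u @ w \<in> fp_normal_closure G S' I P R"
| equiv: "\<lbrakk>w \<in> fp_normal_closure G S' I P R; fp_equiv G S' I P w w'\<rbrakk>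
          \<Longrightarrow> w' \<in> fp_normal_closure G S' I P R"

fun fp_letter_val :: "('a, 'b) monoid_scheme \<Rightarrow> ('a, 'i) fp_letter \<Rightarrow> 'a" where
  "fp_letter_val G (Inl (s, True)) = s"
| "fp_letter_val G (Inl (s, False)) = inv\<^bsub>G\<^esub> s"
| "fp_letter_val G (Inr (i, p)) = p"

fun fp_eval :: "('a, 'b) monoid_scheme \<Rightarrow> ('a, 'i) fp_letter list \<Rightarrow> 'a" where
  "fp_eval G [] = \<one>\<^bsub>G\<^esub>"
| "fp_eval G (x # w) = fp_letter_val G x \<otimes>\<^bsub>G\<^esub> fp_eval G w"

definition rel_fin_presented :: "('a, 'b) monoid_scheme \<Rightarrow> 'i set \<Rightarrow> ('i \<Rightarrow> 'a set) \<Rightarrow> bool" where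
  "rel_fin_presented G I P \<longleftrightarrow>
     (\<exists>S'. finite S' \<and> S' \<subseteq> carrier G
        \<and> (\<forall>g \<in> carrier G. \<exists>w. fp_word S' I P w \<and> fp_eval G w = g)
        \<and> (\<exists>R. finite R \<and> (\<forall>r \<in> R. fp_word S' I P r)
             \<and> (\<forall>w. fp_word S' I P w \<longrightarrow>
                    (fp_eval G w = \<one>\<^bsub>G\<^esub> \<longleftrightarrow> w \<in> fp_normal_closure G S' I P R))))"

text \<open>Vertices: Inl g for g in G, and cone vertices Inr (i, g P_i) for the left cosets of P i,
  forming the disjoint union over i in I of G / P_i.\<close>

definition cone_vertices :: "('a, 'b) monoid_scheme \<Rightarrow> 'i set \<Rightarrow> ('i \<Rightarrow> 'a set) \<Rightarrow> ('a + ('i \<times> 'a set)) set" where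
  "cone_vertices G I P = {Inr (i, g <#\<^bsub>G\<^esub> P i) | i g. i \<in> I \<and> g \<in> carrier G}"

definition coned_V :: "('a, 'b) monoid_scheme \<Rightarrow> 'i set \<Rightarrow> ('i \<Rightarrow> 'a set) \<Rightarrow> ('a + ('i \<times> 'a set)) set" where
  "coned_V G I P = Inl ` carrier G \<union> cone_vertices G I P"

definition coned_adj :: "('a, 'b) monoid_scheme \<Rightarrow> 'i set \<Rightarrow> ('i \<Rightarrow> 'a set) \<Rightarrow> 'a set
    \<Rightarrow> ('a + ('i \<times> 'a set)) \<Rightarrow> ('a + ('i \<times> 'a set)) \<Rightarrow> bool" where
  "coned_adj G I P S u v \<longleftrightarrow> u \<in> coned_V G I P \<and> v \<in> coned_V G I P \<and>
     (case (u, v) of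
        (Inl g, Inl h) \<Rightarrow> inv\<^bsub>G\<^esub> g \<otimes>\<^bsub>G\<^esub> h \<in> S \<or> inv\<^bsub>G\<^esub> h \<otimes>\<^bsub>G\<^esub> g \<in> S
      | (Inl g, Inr (i, A)) \<Rightarrow> g \<in> A
      | (Inr (i, A), Inl g) \<Rightarrow> g \<in> A
      | (Inr _, Inr _) \<Rightarrow> False)"

definition edge_loop :: "('v \<Rightarrow> 'v \<Rightarrow> bool) \<Rightarrow> 'v list \<Rightarrow> bool" where
  "edge_loop adj vs \<longleftrightarrow> vs \<noteq> [] \<and>
     (\<forall>k < length vs. adj (vs ! k) (vs ! (Suc k mod length vs)))"

definition unicone :: "('a + 'c) list \<Rightarrow> bool" where
  "unicone vs \<longleftrightarrow> card {v \<in> set vs. \<exists>c. v = Inr c} \<le> 1"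

definition edge_path :: "'v set \<Rightarrow> ('v \<Rightarrow> 'v \<Rightarrow> bool) \<Rightarrow> 'v list \<Rightarrow> bool" where
  "edge_path V adj p \<longleftrightarrow> p \<noteq> [] \<and> set p \<subseteq> V \<and>
     (\<forall>k. Suc k < length p \<longrightarrow> adj (p ! k) (p ! Suc k))"

text \<open>Elementary combinatorial homotopies of edge paths in the 2-complex obtained from the graph
  by attaching 2-cells along the loops in C: removing a backtrack, or inserting the boundary
  loop of a 2-cell.\<close>
inductive htpy_step :: "('v \<Rightarrow> 'v \<Rightarrow> bool) \<Rightarrow> 'v list set \<Rightarrow> 'v list \<Rightarrow> 'v list \<Rightarrow> bool"
  for adj C where
  backtrack: "adj a b \<Longrightarrow> htpy_step adj C (p @ [a, b, a] @ q) (p @ [a] @ q)"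
| cell: "\<lbrakk>c \<in> C; c \<noteq> []\<rbrakk> \<Longrightarrow> htpy_step adj C (p @ [hd c] @ q) (p @ c @ [hd c] @ q)"

definition edge_htpy :: "('v \<Rightarrow> 'v \<Rightarrow> bool) \<Rightarrow> 'v list set \<Rightarrow> 'v list \<Rightarrow> 'v list \<Rightarrow> bool" where
  "edge_htpy adj C = (symclp (htpy_step adj C))\<^sup>*\<^sup>*"

text \<open>Simple connectivity of the 2-complex (graph (V, adj) plus 2-cells along the loops in C),
  via the edge-path group: connected, and every closed edge path is homotopic to a constant one.\<close>
definition complex_simply_connected :: "'v set \<Rightarrow> ('v \<Rightarrow> 'v \<Rightarrow> bool) \<Rightarrow> 'v list set \<Rightarrow> bool" where
  "complex_simply_connected V adj C \<longleftrightarrow>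
     V \<noteq> {} \<and>
     (\<forall>u \<in> V. \<forall>v \<in> V. \<exists>p. edge_path V adj p \<and> hd p = u \<and> last p = v) \<and>
     (\<forall>p. edge_path V adj p \<and> hd p = last p \<longrightarrow> edge_htpy adj C p [hd p])"

definition unicone_cells :: "('a, 'b) monoid_scheme \<Rightarrow> 'i set \<Rightarrow> ('i \<Rightarrow> 'a set) \<Rightarrow> 'a set \<Rightarrow> nat
    \<Rightarrow> ('a + ('i \<times> 'a set)) list set" where
  "unicone_cells G I P S l =
     {c. edge_loop (coned_adj G I P S) c \<and> unicone c \<and> length c < l}"

definition coarsely_unicone_simply_connected ::
    "('a, 'b) monoid_scheme \<Rightarrow> 'i set \<Rightarrow> ('i \<Rightarrow> 'a set) \<Rightarrow> 'a set \<Rightarrow> bool" where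
  "coarsely_unicone_simply_connected G I P S \<longleftrightarrow>
     (\<exists>l::nat. complex_simply_connected (coned_V G I P) (coned_adj G I P S) (unicone_cells G I P S l))"

end

(*
  A word in the free product of F(S) with the subgroups P_i traces an edge path in the
  coned-off Cayley graph from any base vertex g: a generator is a Cayley edge, and a letter p
  of P_i is the detour g, gP_i, gp through a cone vertex.  Conversely, a path between group
  vertices is traced by the word it reads off.  Under this dictionary the relations of the
  free product are backtracks, and loops with at most one cone vertex correspond to relations
  with at most one letter from the subgroups.

  If (G, P) is finitely presented relative to generators S' and relators R, fix spellings in S of
  the generators in S' and vice versa.  Every relation is then, up to backtracks, a product of
  conjugates of the finitely many relators, and each relator, as well as each spelling of a
  generator, bounds a loop of bounded length; so unicone cells of bounded length make the complex
  simply connected.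

  Conversely, if unicone loops of length < l make the complex simply connected, the closed path
  of any relation is null-homotopic.  After splitting cells that revisit their cone vertex,
  every homotopy step changes the word read off the path by a relation of length at most l + 2
  with at most one subgroup letter; these finitely many relations present G relative to P.
*)

theory Submission
  imports Defs
begin

section \<open>Edge homotopies\<close>

lemma rtranclp_symclp_lift:
  assumes "\<And>x y. r x y \<Longrightarrow> (symclp r')\<^sup>*\<^sup>* (f x) (f y)"
    and "(symclp r)\<^sup>*\<^sup>* x y"
  shows "(symclp r')\<^sup>*\<^sup>* (f x) (f y)"
  using assms(2)
proof (induction rule: rtranclp_induct)
  case (step y z)
  from step(2) have "(symclp r')\<^sup>*\<^sup>* (f y) (f z)"
    by cases (auto intro: assms(1) rtranclp_symclp_sym[OF assms(1)])
  then show ?case by (rule rtranclp_trans[OF step.IH])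
qed simp

lemma rtranclp_symclp_lift_invariant:
  assumes "\<And>x y. r x y \<Longrightarrow> Q x \<Longrightarrow> Q y \<Longrightarrow> (symclp r')\<^sup>*\<^sup>* (f x) (f y)"
    and "\<And>x y. r x y \<Longrightarrow> Q x \<longleftrightarrow> Q y"
    and "(symclp r)\<^sup>*\<^sup>* x y" and "Q x"
  shows "(symclp r')\<^sup>*\<^sup>* (f x) (f y) \<and> Q y"
  using assms(3,4)
proof (induction rule: rtranclp_induct)
  case (step y z)
  then have "Q y" by simp
  from step(2) have "(symclp r')\<^sup>*\<^sup>* (f y) (f z) \<and> Q z"
  proof cases
    case base
    with \<open>Q y\<close> show ?thesis using assms(1,2) by blast
  next
    case sym
    with \<open>Q y\<close> show ?thesis using assms(1,2) rtranclp_symclp_sym by metis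
  qed
  then show ?case using step.IH step.prems rtranclp_trans by metis
qed simp

lemma successively_append_middle:
  "successively R (xs @ [a] @ ys) \<longleftrightarrow> successively R (xs @ [a]) \<and> successively R (a # ys)"
  by (cases ys) (auto simp: successively_append_iff)

lemma successively_drop_cycle:
  "successively R (xs @ [a] @ ys @ [a] @ zs) \<Longrightarrow> successively R (xs @ [a] @ zs)"
  by (metis append_assoc successively_append_iff successively_append_middle)

lemma edge_loop_iff_successively: "edge_loop adj c \<longleftrightarrow> c \<noteq> [] \<and> successively adj (c @ [hd c])"
proof -
  have "successively adj (c @ [hd c]) \<longleftrightarrow> (\<forall>k < length c. adj (c ! k) (c ! (Suc k mod length c)))"
    if "c \<noteq> []"
  proof -
    have "adj ((c @ [hd c]) ! k) ((c @ [hd c]) ! Suc k) = adj (c ! k) (c ! (Suc k mod length c))"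
      if "k < length c" for k
      using \<open>c \<noteq> []\<close> that
      by (cases "Suc k = length c") (auto simp: nth_append hd_conv_nth)
    then show ?thesis unfolding successively_conv_nth by auto
  qed
  then show ?thesis unfolding edge_loop_def by auto
qed

lemma edge_path_iff_successively: "edge_path V adj p \<longleftrightarrow> p \<noteq> [] \<and> set p \<subseteq> V \<and> successively adj p"
  unfolding edge_path_def successively_conv_nth by auto

lemma islE: "isl v \<Longrightarrow> (\<And>a. v = Inl a \<Longrightarrow> Q) \<Longrightarrow> Q"
  by (cases v) auto

definition count_Inr :: "('a + 'b) list \<Rightarrow> nat" where
  "count_Inr xs = length (filter (\<lambda>x. \<not> isl x) xs)"

lemma count_Inr_simps [simp]:
  "count_Inr [] = 0"
  "count_Inr (Inl a # xs) = count_Inr xs"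
  "count_Inr (Inr b # xs) = Suc (count_Inr xs)"
  "count_Inr (xs @ ys) = count_Inr xs + count_Inr ys"
  by (simp_all add: count_Inr_def)

lemma count_Inr_eq_0_iff: "count_Inr xs = 0 \<longleftrightarrow> (\<forall>x \<in> set xs. isl x)"
  by (simp add: count_Inr_def filter_empty_conv)

lemma count_Inr_eq_1_split:
  assumes "count_Inr xs = 1"
  obtains ys x zs where "xs = ys @ [x] @ zs" "\<not> isl x" "count_Inr ys = 0" "count_Inr zs = 0"
proof -
  have "\<exists>x \<in> set xs. \<not> isl x" using assms count_Inr_eq_0_iff by (metis one_neq_zero)
  then obtain ys x zs where "xs = ys @ x # zs" "\<not> isl x" "\<forall>y \<in> set ys. isl y"
    by (rule split_list_first_propE) auto
  with assms that show ?thesis by (auto simp: count_Inr_def filter_empty_conv)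
qed

lemma count_Inr_ge_2_split:
  assumes "count_Inr xs \<ge> 2"
  obtains ys a us b zs where "xs = ys @ [a] @ us @ [b] @ zs" "\<not> isl a" "\<not> isl b" "\<forall>y \<in> set ys. isl y"
proof -
  have "\<exists>x \<in> set xs. \<not> isl x" using assms count_Inr_eq_0_iff by (metis not_numeral_le_zero)
  then obtain ys a zs' where xs: "xs = ys @ a # zs'" "\<not> isl a" "\<forall>y \<in> set ys. isl y"
    by (rule split_list_first_propE) auto
  then have "count_Inr zs' \<ge> 1" using assms by (simp add: count_Inr_def)
  then have "\<exists>x \<in> set zs'. \<not> isl x" using count_Inr_eq_0_iff by (metis not_one_le_zero)
  then obtain us b zs where "zs' = us @ b # zs" "\<not> isl b" by (rule split_list_propE)
  with xs that show ?thesis by simp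
qed

lemma unicone_if_count_Inr_le_1: "count_Inr c \<le> 1 \<Longrightarrow> unicone c"
proof -
  have "{v \<in> set c. \<exists>c'. v = Inr c'} = set (filter (\<lambda>v. \<not> isl v) c)"
    by (auto simp: isl_def) (metis isl_def sum.collapse(2))
  then show "count_Inr c \<le> 1 \<Longrightarrow> unicone c"
    unfolding unicone_def count_Inr_def by (metis card_length le_trans)
qed

lemma unicone_subset: "unicone c \<Longrightarrow> set c' \<subseteq> set c \<Longrightarrow> unicone c'"
  unfolding unicone_def by (rule order.trans[OF card_mono]) auto

lemma unicone_Inr_eq:
  assumes "unicone c" "a \<in> set c" "b \<in> set c" "\<not> isl a" "\<not> isl b"
  shows "a = b"
proof -
  have "a \<in> {v \<in> set c. \<exists>c'. v = Inr c'}" "b \<in> {v \<in> set c. \<exists>c'. v = Inr c'}"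
    using assms by (cases a; cases b; auto)+
  then show ?thesis using assms(1) card_le_Suc0_iff_eq[of "{v \<in> set c. \<exists>c'. v = Inr c'}"]
    unfolding unicone_def by auto
qed

lemma htpy_step_append_both:
  assumes "htpy_step adj C p q" shows "htpy_step adj C (x @ p @ y) (x @ q @ y)"
  using assms
proof cases
  case (backtrack a b u v)
  then show ?thesis using htpy_step.backtrack[of adj a b C "x @ u" "v @ y"] by simp
next
  case (cell c u v)
  then show ?thesis using htpy_step.cell[of c C adj "x @ u" "v @ y"] by simp
qed

lemma edge_htpy_refl [simp]: "edge_htpy adj C p p"
  by (simp add: edge_htpy_def)

lemma edge_htpy_sym: "edge_htpy adj C p q \<Longrightarrow> edge_htpy adj C q p"
  unfolding edge_htpy_def by (rule rtranclp_symclp_sym)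

lemma edge_htpy_trans [trans]: "edge_htpy adj C p q \<Longrightarrow> edge_htpy adj C q r \<Longrightarrow> edge_htpy adj C p r"
  unfolding edge_htpy_def by (rule rtranclp_trans)

lemma edge_htpy_step: "htpy_step adj C p q \<Longrightarrow> edge_htpy adj C p q"
  unfolding edge_htpy_def by (simp add: r_into_rtranclp symclpI)

lemma edge_htpy_append_both: "edge_htpy adj C p q \<Longrightarrow> edge_htpy adj C (x @ p @ y) (x @ q @ y)"
  unfolding edge_htpy_def
  by (rule rtranclp_symclp_lift[where f="\<lambda>p. x @ p @ y"])
     (auto intro: r_into_rtranclp symclpI htpy_step_append_both)

lemma edge_htpy_backtrack: "adj a b \<Longrightarrow> edge_htpy adj C [a, b, a] [a]"
  using edge_htpy_step[OF htpy_step.backtrack[of adj a b C "[]" "[]"]] by simp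

lemma edge_htpy_cell: "c \<in> C \<Longrightarrow> c \<noteq> [] \<Longrightarrow> edge_htpy adj C (c @ [hd c]) [hd c]"
  using edge_htpy_sym[OF edge_htpy_step[OF htpy_step.cell[of c C adj "[]" "[]"]]] by simp

(* The loop a h c a is the rotated loop h c a h conjugated by the edge from a to h. *)
lemma edge_htpy_Cons_loop:
  assumes "adj a h" and "edge_htpy adj C (h # c @ [a, h]) [h]"
  shows "edge_htpy adj C (a # h # c @ [a]) [a]"
proof -
  have "edge_htpy adj C (a # h # c @ [a]) ((a # h # c) @ [a, h, a] @ [])"
    using edge_htpy_append_both[OF edge_htpy_backtrack[of adj, OF assms(1)], of C "a # h # c" "[]"]
    by (simp add: edge_htpy_sym)
  also have "(a # h # c) @ [a, h, a] @ [] = [a] @ (h # c @ [a, h]) @ [a]" by simp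
  also have "edge_htpy adj C \<dots> ([a] @ [h] @ [a])"
    by (rule edge_htpy_append_both[OF assms(2)])
  also have "edge_htpy adj C ([a] @ [h] @ [a]) [a]"
    using edge_htpy_backtrack[of adj, OF assms(1)] by simp
  finally show ?thesis .
qed

section \<open>Words of the free product\<close>

type_synonym ('a, 'i) vertex = "'a + ('i \<times> 'a set)"

lemma fp_letter_cases [case_names gen factor]:
  obtains (gen) s b where "x = Inl (s, b)" | (factor) i p where "x = Inr (i, p)"
  by (cases x) auto

lemma fp_word_simps [simp]:
  "fp_word S I P []"
  "fp_word S I P (Inl (s, b) # w) \<longleftrightarrow> s \<in> S \<and> fp_word S I P w"
  "fp_word S I P (Inr (i, p) # w) \<longleftrightarrow> i \<in> I \<and> p \<in> P i \<and> fp_word S I P w"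
  "fp_word S I P (u @ w) \<longleftrightarrow> fp_word S I P u \<and> fp_word S I P w"
  by (auto simp: fp_word_def)

lemma fp_word_Cons: "fp_word S I P (x # w) \<longleftrightarrow> fp_word S I P [x] \<and> fp_word S I P w"
  by (auto simp: fp_word_def)

lemma fp_word_mono: "fp_word S I P w \<Longrightarrow> S \<subseteq> S' \<Longrightarrow> fp_word S' I P w"
  by (induction w rule: list.induct) (auto simp: fp_word_def split: sum.splits)

lemma fp_word_inv_simps [simp]:
  "fp_word_inv G [] = []"
  "fp_word_inv G (x # w) = fp_word_inv G w @ [fp_letter_inv G x]"
  "fp_word_inv G (u @ w) = fp_word_inv G w @ fp_word_inv G u"
  by (auto simp: fp_word_inv_def)

lemma fp_step_append_both: "fp_step G u v \<Longrightarrow> fp_step G (x @ u @ y) (x @ v @ y)"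
proof (induction rule: fp_step.induct)
  case (cancel u s b v) then show ?case using fp_step.cancel[of G "x @ u" s b "v @ y"] by simp
next
  case (merge u i p q v) then show ?case using fp_step.merge[of G "x @ u" i p q "v @ y"] by simp
next
  case (unit u i v) then show ?case using fp_step.unit[of G "x @ u" i "v @ y"] by simp
qed

lemma fp_equiv_fp_word: "fp_equiv G S I P w w' \<Longrightarrow> fp_word S I P w \<Longrightarrow> fp_word S I P w'"
  unfolding fp_equiv_def by (induction rule: rtranclp_induct) (auto elim: symclpE)

lemma fp_equiv_append_both:
  assumes "fp_equiv G S I P w w'" "fp_word S I P x" "fp_word S I P y"
  shows "fp_equiv G S I P (x @ w @ y) (x @ w' @ y)"
  using assms(1) unfolding fp_equiv_def
proof (rule rtranclp_symclp_lift[where f="\<lambda>w. x @ w @ y", rotated])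
  fix u v assume "fp_word S I P u \<and> fp_word S I P v \<and> fp_step G u v"
  then show "(symclp (\<lambda>u v. fp_word S I P u \<and> fp_word S I P v \<and> fp_step G u v))\<^sup>*\<^sup>*
      (x @ u @ y) (x @ v @ y)"
    using assms(2,3) fp_step_append_both by (intro r_into_rtranclp symclpI1) auto
qed

lemma fp_equiv_step: "fp_step G u v \<Longrightarrow> fp_word S I P u \<Longrightarrow> fp_word S I P v \<Longrightarrow> fp_equiv G S I P u v"
  unfolding fp_equiv_def by (intro r_into_rtranclp symclpI1) auto

lemma fp_equiv_sym: "fp_equiv G S I P u v \<Longrightarrow> fp_equiv G S I P v u"
  unfolding fp_equiv_def by (rule rtranclp_symclp_sym)

lemma fp_equiv_trans [trans]: "fp_equiv G S I P u v \<Longrightarrow> fp_equiv G S I P v w \<Longrightarrow> fp_equiv G S I P u w"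
  unfolding fp_equiv_def by (rule rtranclp_trans)

locale group_pair = group G for G :: "('a, 'b) monoid_scheme" (structure) +
  fixes I :: "'i set" and P :: "'i \<Rightarrow> 'a set" and S :: "'a set"
  assumes subgroup_P: "\<And>i. i \<in> I \<Longrightarrow> subgroup (P i) G" and S_carrier: "S \<subseteq> carrier G"
begin

abbreviation "adj \<equiv> coned_adj G I P S"
abbreviation "V \<equiv> coned_V G I P"
abbreviation "carrier_word \<equiv> fp_word (carrier G) I P"

lemma inv_mult_cancel_left [simp]: "x \<in> carrier G \<Longrightarrow> y \<in> carrier G \<Longrightarrow> inv x \<otimes> (x \<otimes> y) = y"
  by (simp add: m_assoc[symmetric])

lemma mult_inv_cancel_left [simp]: "x \<in> carrier G \<Longrightarrow> y \<in> carrier G \<Longrightarrow> x \<otimes> (inv x \<otimes> y) = y"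
  by (simp add: m_assoc[symmetric])

lemma P_carrier: "i \<in> I \<Longrightarrow> p \<in> P i \<Longrightarrow> p \<in> carrier G"
  by (rule subgroup.mem_carrier[OF subgroup_P])

lemma P_one: "i \<in> I \<Longrightarrow> \<one> \<in> P i"
  by (rule subgroup.one_closed[OF subgroup_P])

lemma P_mult: "i \<in> I \<Longrightarrow> p \<in> P i \<Longrightarrow> q \<in> P i \<Longrightarrow> p \<otimes> q \<in> P i"
  by (rule subgroup.m_closed[OF subgroup_P])

lemma P_inv: "i \<in> I \<Longrightarrow> p \<in> P i \<Longrightarrow> inv p \<in> P i"
  by (rule subgroup.m_inv_closed[OF subgroup_P])

lemma carrier_wordI: "fp_word S' I P w \<Longrightarrow> S' \<subseteq> carrier G \<Longrightarrow> carrier_word w"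
  by (rule fp_word_mono)

lemma S_word_carrier: "fp_word S I P w \<Longrightarrow> carrier_word w"
  using carrier_wordI S_carrier by blast

lemma fp_letter_val_Inl [simp]: "fp_letter_val G (Inl (s, b)) = (if b then s else inv s)"
  by (cases b) auto

lemma fp_eval_closed [simp]: "carrier_word w \<Longrightarrow> fp_eval G w \<in> carrier G"
proof (induction w)
  case (Cons x w) then show ?case by (cases x rule: fp_letter_cases) (auto simp: P_carrier)
qed simp

lemma fp_eval_append: "carrier_word u \<Longrightarrow> carrier_word w \<Longrightarrow> fp_eval G (u @ w) = fp_eval G u \<otimes> fp_eval G w"
proof (induction u)
  case (Cons x u) then show ?case by (cases x rule: fp_letter_cases) (auto simp: m_assoc P_carrier)
qed simp

lemma fp_word_word_inv: "fp_word S' I P w \<Longrightarrow> fp_word S' I P (fp_word_inv G w)"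
  by (induction w) (auto simp: fp_word_def P_inv split: sum.splits)

lemma fp_eval_word_inv: "carrier_word w \<Longrightarrow> fp_eval G (fp_word_inv G w) = inv (fp_eval G w)"
proof (induction w)
  case (Cons x w)
  then show ?case
    by (cases x rule: fp_letter_cases)
       (auto simp: fp_eval_append fp_word_word_inv inv_mult_group P_carrier P_inv)
qed simp

lemma fp_word_inv_inv [simp]: "carrier_word w \<Longrightarrow> fp_word_inv G (fp_word_inv G w) = w"
proof (induction w)
  case (Cons x w)
  then show ?case by (cases x rule: fp_letter_cases) (auto simp: P_carrier)
qed simp

lemma fp_word_concat_map: "(\<And>x. x \<in> set w \<Longrightarrow> fp_word S' I P (f x)) \<Longrightarrow> fp_word S' I P (concat (map f w))"
  by (induction w) auto

lemma fp_eval_concat_map: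
  assumes "\<And>x. x \<in> set w \<Longrightarrow> carrier_word (f x) \<and> fp_eval G (f x) = fp_letter_val G x"
  shows "fp_eval G (concat (map f w)) = fp_eval G w"
  using assms
proof (induction w)
  case (Cons x w)
  then have "carrier_word (concat (map f w))" by (intro fp_word_concat_map) auto
  with Cons show ?case by (simp add: fp_eval_append)
qed simp

lemma fp_eval_eq_one_factor_letter:
  assumes "carrier_word (a @ [Inr (i, p)] @ b)" "fp_eval G (a @ [Inr (i, p)] @ b) = \<one>"
  shows "p = inv (fp_eval G a) \<otimes> inv (fp_eval G b)"
proof -
  have c: "fp_eval G a \<in> carrier G" "fp_eval G b \<in> carrier G" "p \<in> carrier G"
    using assms(1) P_carrier by auto
  have "p = inv (fp_eval G a) \<otimes> (fp_eval G a \<otimes> p \<otimes> fp_eval G b) \<otimes> inv (fp_eval G b)"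
    using c by (simp add: m_assoc)
  also have "fp_eval G a \<otimes> p \<otimes> fp_eval G b = \<one>"
    using assms c by (simp add: fp_eval_append m_assoc)
  finally show ?thesis using c by simp
qed

lemma fp_equiv_cancel_left: "fp_word S' I P x \<Longrightarrow> fp_equiv G S' I P (fp_word_inv G x @ x) []"
proof (induction x)
  case (Cons a x)
  have a: "fp_word S' I P [a]" and x: "fp_word S' I P x"
    using Cons.prems fp_word_Cons by blast+
  have "fp_equiv G S' I P [fp_letter_inv G a, a] []"
  proof (cases a rule: fp_letter_cases)
    case (gen s b)
    have "fp_step G ([] @ [Inl (s, \<not> b), Inl (s, \<not> \<not> b)] @ []) ([] @ [])" by (rule fp_step.cancel)
    then show ?thesis using gen a by (intro fp_equiv_step) auto
  next
    case (factor i p)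
    then have ip: "i \<in> I" "p \<in> P i" "p \<in> carrier G" using a P_carrier by auto
    have "fp_step G ([] @ [Inr (i, inv p), Inr (i, p)] @ []) ([] @ [Inr (i, inv p \<otimes> p)] @ [])"
      by (rule fp_step.merge)
    then have "fp_equiv G S' I P [Inr (i, inv p), Inr (i, p)] [Inr (i, \<one>)]"
      using ip P_inv P_one by (intro fp_equiv_step) auto
    also have "fp_equiv G S' I P [Inr (i, \<one>)] []"
      using fp_step.unit[of G "[]" i "[]"] ip P_one by (intro fp_equiv_step) auto
    finally show ?thesis using factor by simp
  qed
  from fp_equiv_append_both[OF this fp_word_word_inv[OF x] x]
  have "fp_equiv G S' I P (fp_word_inv G (a # x) @ a # x) (fp_word_inv G x @ x)" by simp
  then show ?case using Cons.IH[OF x] fp_equiv_trans by blast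
qed (simp add: fp_equiv_def)

lemma fp_step_fp_eval:
  "fp_step G u v \<Longrightarrow> fp_word S' I P u \<Longrightarrow> S' \<subseteq> carrier G \<Longrightarrow> fp_eval G u = fp_eval G v"
proof (induction rule: fp_step.induct)
  case (cancel u s b v)
  then have "carrier_word u" "carrier_word v" "s \<in> carrier G" using carrier_wordI by auto
  then show ?case by (cases b) (auto simp: fp_eval_append)
next
  case (merge u i p q v)
  then have "carrier_word u" "carrier_word v" "i \<in> I" "p \<in> P i" "q \<in> P i"
    using carrier_wordI by auto
  then show ?case by (simp add: fp_eval_append m_assoc P_mult P_carrier)
next
  case (unit u i v)
  then have "carrier_word u" "carrier_word v" "i \<in> I" using carrier_wordI by auto
  then show ?case by (simp add: fp_eval_append P_one)
qed

lemma fp_equiv_fp_eval: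
  "fp_equiv G S' I P u v \<Longrightarrow> fp_word S' I P u \<Longrightarrow> S' \<subseteq> carrier G \<Longrightarrow> fp_eval G u = fp_eval G v"
  unfolding fp_equiv_def
  by (induction rule: rtranclp_induct) (auto elim!: symclpE dest: fp_step_fp_eval)

section \<open>Paths in the coned-off Cayley graph and their words\<close>

lemma coned_V_Inl [simp]: "Inl g \<in> V \<longleftrightarrow> g \<in> carrier G"
  by (auto simp: coned_V_def cone_vertices_def)

lemma coned_V_Inr: "Inr (i, A) \<in> V \<longleftrightarrow> (\<exists>g \<in> carrier G. i \<in> I \<and> A = g <# P i)"
  by (auto simp: coned_V_def cone_vertices_def)

lemma adj_Inl_Inl:
  "adj (Inl g) (Inl h) \<longleftrightarrow> g \<in> carrier G \<and> h \<in> carrier G \<and> (inv g \<otimes> h \<in> S \<or> inv h \<otimes> g \<in> S)"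
  by (auto simp: coned_adj_def)

lemma adj_Inl_Inr: "adj (Inl g) (Inr (i, A)) \<longleftrightarrow> g \<in> carrier G \<and> Inr (i, A) \<in> V \<and> g \<in> A"
  by (auto simp: coned_adj_def)

lemma adj_Inr_Inl: "adj (Inr (i, A)) (Inl g) \<longleftrightarrow> g \<in> carrier G \<and> Inr (i, A) \<in> V \<and> g \<in> A"
  by (auto simp: coned_adj_def)

lemma adj_Inr_Inr [simp]: "\<not> adj (Inr a) (Inr b)"
  by (simp add: coned_adj_def split: prod.splits)

lemma adj_sym: "adj u v \<Longrightarrow> adj v u"
  unfolding coned_adj_def by (auto split: sum.splits prod.splits)

lemma adj_in_V: "adj u v \<Longrightarrow> u \<in> V \<and> v \<in> V"
  by (simp add: coned_adj_def)

lemma adj_Inl_Inr_coset: "adj (Inl g) (Inr (i, A)) \<Longrightarrow> i \<in> I \<and> A = g <# P i"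
  unfolding adj_Inl_Inr coned_V_Inr using l_repr_independence[OF _ _ subgroup_P] by blast

lemma l_coset_mult_P: "g \<in> carrier G \<Longrightarrow> i \<in> I \<Longrightarrow> p \<in> P i \<Longrightarrow> (g \<otimes> p) <# P i = g <# P i"
proof -
  assume "g \<in> carrier G" "i \<in> I" "p \<in> P i"
  moreover from this have "g \<otimes> p \<in> g <# P i" unfolding l_coset_def by blast
  ultimately show ?thesis using l_repr_independence[OF _ _ subgroup_P] by metis
qed

lemma adj_cone_steps:
  assumes "g \<in> carrier G" "i \<in> I" "p \<in> P i"
  shows "adj (Inl g) (Inr (i, g <# P i))" "adj (Inr (i, g <# P i)) (Inl (g \<otimes> p))"
  using assms lcos_self[OF _ subgroup_P] P_carrier
  by (auto simp: adj_Inl_Inr adj_Inr_Inl coned_V_Inr l_coset_def)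

lemma adj_gen_step:
  assumes "g \<in> carrier G" "s \<in> S"
  shows "adj (Inl g) (Inl (g \<otimes> fp_letter_val G (Inl (s, b))))"
proof -
  have "s \<in> carrier G" using assms S_carrier by auto
  with assms show ?thesis by (cases b) (auto simp: adj_Inl_Inl inv_mult_group m_assoc)
qed

fun word_path :: "'a \<Rightarrow> ('a, 'i) fp_letter list \<Rightarrow> ('a, 'i) vertex list" where
  "word_path g [] = [Inl g]"
| "word_path g (Inl (s, b) # w) = Inl g # word_path (g \<otimes> (if b then s else inv s)) w"
| "word_path g (Inr (i, p) # w) = Inl g # Inr (i, g <# P i) # word_path (g \<otimes> p) w"

lemma word_path_Cons_tl: "word_path g w = Inl g # tl (word_path g w)"
  by (induction g w rule: word_path.induct) auto

lemma word_path_not_Nil [simp]: "word_path g w \<noteq> []"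
  by (subst word_path_Cons_tl) simp

lemma hd_word_path [simp]: "hd (word_path g w) = Inl g"
  by (subst word_path_Cons_tl) simp

lemma last_word_path: "g \<in> carrier G \<Longrightarrow> carrier_word w \<Longrightarrow> last (word_path g w) = Inl (g \<otimes> fp_eval G w)"
  by (induction g w rule: word_path.induct) (auto simp: m_assoc P_carrier)

lemma word_path_append:
  "g \<in> carrier G \<Longrightarrow> carrier_word u \<Longrightarrow>
    word_path g (u @ w) = butlast (word_path g u) @ word_path (g \<otimes> fp_eval G u) w"
  by (induction g u rule: word_path.induct) (auto simp: m_assoc butlast_append P_carrier)

lemma word_path_append':
  assumes "g \<in> carrier G" "carrier_word u"
  shows "word_path g (u @ w) = word_path g u @ tl (word_path (g \<otimes> fp_eval G u) w)"
proof -
  have "word_path g u = butlast (word_path g u) @ [Inl (g \<otimes> fp_eval G u)]"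
    using append_butlast_last_id[OF word_path_not_Nil] last_word_path[OF assms] by metis
  then show ?thesis
    using word_path_append[OF assms] word_path_Cons_tl by (metis append.assoc append_Cons append_Nil)
qed

lemma word_path_in_graph:
  "fp_word S I P w \<Longrightarrow> g \<in> carrier G \<Longrightarrow> successively adj (word_path g w) \<and> set (word_path g w) \<subseteq> V"
proof (induction g w rule: word_path.induct)
  case (2 g s b w)
  have "s \<in> carrier G" using 2 S_carrier by auto
  with 2 adj_gen_step[of g s b] show ?case by (simp add: successively_Cons)
next
  case (3 g i p w)
  then have "g \<otimes> p \<in> carrier G" using P_carrier by auto
  with 3 adj_cone_steps[of g i p] show ?case by (auto simp: successively_Cons dest: adj_in_V)
qed simp

lemma count_Inr_word_path [simp]: "count_Inr (word_path g w) = count_Inr w"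
  by (induction g w rule: word_path.induct) auto

lemma length_word_path: "length (word_path g w) = Suc (length w + count_Inr w)"
  by (induction g w rule: word_path.induct) auto

lemma word_path_loop:
  assumes "g \<in> carrier G" "carrier_word w" "fp_eval G w = \<one>" "w \<noteq> []"
  obtains c where "word_path g w = c @ [hd c]" "c \<noteq> []" "hd c = Inl g"
proof -
  obtain c v where cv: "word_path g w = c @ [v]"
    using word_path_not_Nil by (metis rev_exhaust)
  have "v = Inl g" using last_word_path[OF assms(1,2)] assms(1,3) cv by simp
  have "length c = length w + count_Inr w" using length_word_path[of g w] cv by simp
  then have "c \<noteq> []" using assms(4) by auto
  moreover have "hd c = Inl g" using hd_word_path[of g w] cv \<open>c \<noteq> []\<close> by simp
  ultimately show ?thesis using that cv \<open>v = Inl g\<close> by simp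
qed

definition edge_letter :: "'a \<Rightarrow> 'a \<Rightarrow> ('a, 'i) fp_letter" where
  "edge_letter g h = (if inv g \<otimes> h \<in> S then Inl (inv g \<otimes> h, True) else Inl (inv h \<otimes> g, False))"

fun path_word :: "('a, 'i) vertex list \<Rightarrow> ('a, 'i) fp_letter list" where
  "path_word (Inl g # Inl h # r) = edge_letter g h # path_word (Inl h # r)"
| "path_word (Inl g # Inr (i, A) # Inl h # r) = Inr (i, inv g \<otimes> h) # path_word (Inl h # r)"
| "path_word _ = []"

lemma edge_letter:
  assumes "adj (Inl g) (Inl h)"
  shows "fp_word S I P [edge_letter g h]" "fp_letter_val G (edge_letter g h) = inv g \<otimes> h"
    and "isl (edge_letter g h)"
  using assms by (auto simp: edge_letter_def adj_Inl_Inl inv_mult_group)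

lemma word_path_path_word:
  "p \<noteq> [] \<Longrightarrow> successively adj p \<Longrightarrow> hd p = Inl g \<Longrightarrow> isl (last p) \<Longrightarrow>
    fp_word S I P (path_word p) \<and> word_path g (path_word p) = p"
proof (induction p arbitrary: g rule: path_word.induct)
  case (1 g' h r)
  then have a: "adj (Inl g) (Inl h)"
    and IH: "fp_word S I P (path_word (Inl h # r)) \<and> word_path h (path_word (Inl h # r)) = Inl h # r"
    by (simp_all add: successively_Cons)
  then have "g \<in> carrier G" "h \<in> carrier G" by (auto simp: adj_Inl_Inl)
  with edge_letter[OF a] IH 1(4) show ?case
    by (cases "edge_letter g h" rule: fp_letter_cases) auto
next
  case (2 g' i A h r)
  then have a: "adj (Inl g) (Inr (i, A))" "adj (Inr (i, A)) (Inl h)"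
    and IH: "fp_word S I P (path_word (Inl h # r)) \<and> word_path h (path_word (Inl h # r)) = Inl h # r"
    by (simp_all add: successively_Cons)
  then have "i \<in> I" "A = g <# P i" "g \<in> carrier G" "h \<in> carrier G" "h \<in> A"
    using adj_Inl_Inr_coset by (auto simp: adj_Inr_Inl adj_Inl_Inr)
  then have "inv g \<otimes> h \<in> P i" using subgroup.lcos_module_imp[OF subgroup_P] is_group by blast
  with IH \<open>i \<in> I\<close> \<open>A = g <# P i\<close> \<open>g \<in> carrier G\<close> \<open>h \<in> carrier G\<close> 2(4) show ?case
    by auto
qed (simp_all add: successively_Cons)

lemma path_word_loop:
  assumes "q \<noteq> []" "successively adj q" "hd q = Inl g" "last q = Inl g" "g \<in> carrier G"
  shows "fp_word S I P (path_word q)" "word_path g (path_word q) = q" "fp_eval G (path_word q) = \<one>"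
proof -
  show w: "fp_word S I P (path_word q)" "word_path g (path_word q) = q"
    using word_path_path_word[OF assms(1-3)] assms(4) by auto
  then have "Inl (g \<otimes> fp_eval G (path_word q)) = Inl g"
    using last_word_path[OF assms(5) S_word_carrier[OF w(1)]] assms(4) by simp
  then show "fp_eval G (path_word q) = \<one>" using assms(5) S_word_carrier[OF w(1)] by simp
qed

definition group_path :: "('a, 'i) vertex list \<Rightarrow> bool" where
  "group_path p \<longleftrightarrow> p \<noteq> [] \<and> successively adj p \<and> isl (hd p) \<and> isl (last p)"

lemma path_word_append:
  "successively adj (x @ [Inl g]) \<Longrightarrow> x = [] \<or> isl (hd x) \<Longrightarrow>
    path_word (x @ [Inl g] @ y) = path_word (x @ [Inl g]) @ path_word (Inl g # y)"
  by (induction x rule: path_word.induct) (auto simp: successively_Cons elim!: islE)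

lemma group_path_split:
  assumes "group_path (u @ [Inl g] @ v)"
  shows "group_path (u @ [Inl g])" "group_path (Inl g # v)" "u = [] \<or> isl (hd u)"
  using assms successively_append_middle[of adj u "Inl g" v]
  by (auto simp: group_path_def) (cases u; simp)+

lemma group_path_path_word:
  assumes "group_path p"
  shows "fp_word S I P (path_word p)"
proof -
  obtain g where "hd p = Inl g" using assms by (cases "hd p") (auto simp: group_path_def)
  with word_path_path_word[of p g] assms show ?thesis by (auto simp: group_path_def)
qed

section \<open>Homotopies between word paths\<close>

abbreviation "cells l \<equiv> unicone_cells G I P S l"

(* Requiring equal values makes word_htpy a congruence for concatenation: the paths of
   u @ w and v @ w from g continue with the same path of w. *)
definition word_htpy ::
    "('a, 'i) vertex list set \<Rightarrow> ('a, 'i) fp_letter list \<Rightarrow> ('a, 'i) fp_letter list \<Rightarrow> bool" where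
  "word_htpy C u v \<longleftrightarrow> fp_word S I P u \<and> fp_word S I P v \<and> fp_eval G u = fp_eval G v \<and>
     (\<forall>g \<in> carrier G. edge_htpy adj C (word_path g u) (word_path g v))"

lemma word_htpy_refl: "fp_word S I P u \<Longrightarrow> word_htpy C u u"
  by (simp add: word_htpy_def)

lemma word_htpy_sym: "word_htpy C u v \<Longrightarrow> word_htpy C v u"
  by (simp add: word_htpy_def edge_htpy_sym)

lemma word_htpy_trans [trans]: "word_htpy C u v \<Longrightarrow> word_htpy C v w \<Longrightarrow> word_htpy C u w"
  unfolding word_htpy_def by (metis edge_htpy_trans)

lemma word_htpy_append:
  assumes "word_htpy C u v" "word_htpy C u' v'"
  shows "word_htpy C (u @ u') (v @ v')"
proof -
  have w: "fp_word S I P u" "fp_word S I P v" "fp_word S I P u'" "fp_word S I P v'"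
    and e: "fp_eval G u = fp_eval G v" "fp_eval G u' = fp_eval G v'"
    using assms by (auto simp: word_htpy_def)
  have c: "carrier_word u" "carrier_word v" "carrier_word u'" "carrier_word v'"
    using w S_word_carrier by auto
  have "edge_htpy adj C (word_path g (u @ u')) (word_path g (v @ v'))" if g: "g \<in> carrier G" for g
  proof -
    let ?h = "g \<otimes> fp_eval G v"
    have "word_path g (u @ u') = [] @ word_path g u @ tl (word_path ?h u')"
      using word_path_append'[OF g c(1)] e by simp
    also have "edge_htpy adj C \<dots> ([] @ word_path g v @ tl (word_path ?h u'))"
      using assms(1) g by (intro edge_htpy_append_both) (simp add: word_htpy_def)
    also have "[] @ word_path g v @ tl (word_path ?h u') = butlast (word_path g v) @ word_path ?h u' @ []"
      using word_path_append'[OF g c(2)] word_path_append[OF g c(2)] by simp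
    also have "edge_htpy adj C \<dots> (butlast (word_path g v) @ word_path ?h v' @ [])"
      using assms(2) g c(2) by (intro edge_htpy_append_both) (simp add: word_htpy_def)
    also have "butlast (word_path g v) @ word_path ?h v' @ [] = word_path g (v @ v')"
      using word_path_append[OF g c(2)] by simp
    finally show ?thesis .
  qed
  with w e c show ?thesis by (simp add: word_htpy_def fp_eval_append)
qed

lemma word_htpy_concat_map:
  "(\<And>x. x \<in> set w \<Longrightarrow> word_htpy C [x] (f x)) \<Longrightarrow> word_htpy C w (concat (map f w))"
proof (induction w)
  case (Cons x w)
  then show ?case using word_htpy_append[of C "[x]" "f x" w] by simp
qed (simp add: word_htpy_refl)

lemma word_htpy_letter_inv:
  assumes "fp_word S I P [a]"
  shows "word_htpy C [a, fp_letter_inv G a] []"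
proof -
  have "edge_htpy adj C (word_path g [a, fp_letter_inv G a]) [Inl g]" if g: "g \<in> carrier G" for g
  proof (cases a rule: fp_letter_cases)
    case (gen s b)
    then have s: "s \<in> S" "s \<in> carrier G" using assms S_carrier by auto
    have "word_path g [a, fp_letter_inv G a] = [Inl g, Inl (g \<otimes> fp_letter_val G (Inl (s, b))), Inl g]"
      using gen s g by (simp add: m_assoc)
    then show ?thesis using edge_htpy_backtrack[of adj, OF adj_gen_step[OF g s(1)]] by simp
  next
    case (factor i p)
    then have ip: "i \<in> I" "p \<in> P i" "p \<in> carrier G" using assms P_carrier by auto
    have "word_path g [a, fp_letter_inv G a]
      = [Inl g] @ [Inr (i, g <# P i), Inl (g \<otimes> p), Inr (i, g <# P i)] @ [Inl g]"
      using factor ip g by (simp add: m_assoc l_coset_mult_P)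
    also have "edge_htpy adj C \<dots> ([Inl g] @ [Inr (i, g <# P i)] @ [Inl g])"
      by (intro edge_htpy_append_both edge_htpy_backtrack adj_cone_steps g ip)
    also have "edge_htpy adj C \<dots> [Inl g]"
      using edge_htpy_backtrack[of adj, OF adj_cone_steps(1)[OF g ip(1,2)]] by simp
    finally show ?thesis .
  qed
  moreover have "fp_eval G [a, fp_letter_inv G a] = \<one>"
    using S_word_carrier[OF assms] by (cases a rule: fp_letter_cases) (auto simp: P_carrier)
  moreover have "fp_word S I P [a, fp_letter_inv G a]"
    using fp_word_simps(4)[of S I P "[a]"] assms fp_word_word_inv[OF assms] by simp
  ultimately show ?thesis by (simp add: word_htpy_def)
qed

lemma word_htpy_cancel: "fp_word S I P x \<Longrightarrow> word_htpy C (x @ fp_word_inv G x) []"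
proof (induction x)
  case (Cons a x)
  then have a: "fp_word S I P [a]" and x: "fp_word S I P x" using fp_word_Cons by blast+
  have "word_htpy C ([a] @ (x @ fp_word_inv G x) @ [fp_letter_inv G a]) ([a] @ [] @ [fp_letter_inv G a])"
    using fp_word_word_inv[OF a] by (intro word_htpy_append word_htpy_refl Cons.IH x a) simp
  also have "word_htpy C ([a] @ [] @ [fp_letter_inv G a]) []"
    using word_htpy_letter_inv[OF a] by simp
  finally show ?case by simp
qed (simp add: word_htpy_refl)

lemma word_htpy_swap:
  assumes "word_htpy C (fp_word_inv G x @ y) []" "fp_word S I P x"
  shows "word_htpy C x y"
proof -
  have "word_htpy C (x @ []) (x @ (fp_word_inv G x @ y))"
    using assms word_htpy_sym by (intro word_htpy_append word_htpy_refl) auto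
  also have "x @ (fp_word_inv G x @ y) = (x @ fp_word_inv G x) @ y" by simp
  also have "word_htpy C \<dots> ([] @ y)"
    using assms by (intro word_htpy_append word_htpy_cancel word_htpy_refl) (auto simp: word_htpy_def)
  finally show ?thesis by simp
qed

lemma word_htpy_word_inv:
  assumes "word_htpy C w []"
  shows "word_htpy C (fp_word_inv G w) []"
proof -
  have w: "fp_word S I P w" using assms by (simp add: word_htpy_def)
  then have "word_htpy C (fp_word_inv G w @ []) (fp_word_inv G w @ w)"
    using assms word_htpy_sym by (intro word_htpy_append word_htpy_refl fp_word_word_inv) auto
  also have "word_htpy C (fp_word_inv G w @ w) []"
    using word_htpy_cancel[OF fp_word_word_inv[OF w]] S_word_carrier[OF w] by simp
  finally show ?thesis by simp
qed

lemma word_htpy_conj: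
  assumes "word_htpy C r []" "fp_word S I P u" "word_htpy C w []"
  shows "word_htpy C (u @ r @ fp_word_inv G u @ w) []"
proof -
  have "word_htpy C (u @ r @ (fp_word_inv G u @ w)) (u @ [] @ (fp_word_inv G u @ w))"
    using assms fp_word_word_inv[OF assms(2)]
    by (intro word_htpy_append word_htpy_refl) (auto simp: word_htpy_def)
  also have "u @ [] @ (fp_word_inv G u @ w) = (u @ fp_word_inv G u) @ w" by simp
  also have "word_htpy C \<dots> ([] @ [])"
    using assms by (intro word_htpy_append word_htpy_cancel)
  finally show ?thesis by simp
qed

lemma word_htpy_merge:
  assumes "i \<in> I" "p \<in> P i" "q \<in> P i"
  shows "word_htpy C [Inr (i, p), Inr (i, q)] [Inr (i, p \<otimes> q)]"
proof -
  have pq: "p \<in> carrier G" "q \<in> carrier G" using assms P_carrier by auto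
  have "edge_htpy adj C (word_path h [Inr (i, p), Inr (i, q)]) (word_path h [Inr (i, p \<otimes> q)])"
    if h: "h \<in> carrier G" for h
  proof -
    have "word_path h [Inr (i, p), Inr (i, q)]
      = [Inl h] @ [Inr (i, h <# P i), Inl (h \<otimes> p), Inr (i, h <# P i)] @ [Inl (h \<otimes> p \<otimes> q)]"
      using assms pq h by (simp add: l_coset_mult_P)
    also have "edge_htpy adj C \<dots> ([Inl h] @ [Inr (i, h <# P i)] @ [Inl (h \<otimes> p \<otimes> q)])"
      by (intro edge_htpy_append_both edge_htpy_backtrack adj_cone_steps h assms)
    also have "[Inl h] @ [Inr (i, h <# P i)] @ [Inl (h \<otimes> p \<otimes> q)] = word_path h [Inr (i, p \<otimes> q)]"
      using pq h by (simp add: m_assoc)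
    finally show ?thesis .
  qed
  with assms pq show ?thesis by (simp add: word_htpy_def P_mult m_assoc)
qed

lemma word_htpy_unit:
  assumes "i \<in> I"
  shows "word_htpy C [Inr (i, \<one>)] []"
proof -
  have "edge_htpy adj C (word_path h [Inr (i, \<one>)]) (word_path h [])" if h: "h \<in> carrier G" for h
    using edge_htpy_backtrack[of adj, OF adj_cone_steps(1)[OF h assms P_one[OF assms]]] h by simp
  with assms show ?thesis by (simp add: word_htpy_def P_one)
qed

lemma word_htpy_short_relator:
  assumes "fp_word S I P w" "fp_eval G w = \<one>" "count_Inr w \<le> 1" "length w + count_Inr w < l"
  shows "word_htpy (cells l) w []"
proof (cases "w = []")
  case False
  have "edge_htpy adj (cells l) (word_path g w) [Inl g]" if g: "g \<in> carrier G" for g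
  proof -
    obtain c where c: "word_path g w = c @ [hd c]" "c \<noteq> []" "hd c = Inl g"
      using word_path_loop[OF g S_word_carrier[OF assms(1)] assms(2) False] .
    have "edge_loop adj c"
      using c word_path_in_graph[OF assms(1) g] by (simp add: edge_loop_iff_successively)
    moreover have "unicone c"
      using c assms(3) count_Inr_word_path[of g w] by (intro unicone_if_count_Inr_le_1) simp
    moreover have "length c < l"
      using c assms(4) length_word_path[of g w] by simp
    ultimately have "c \<in> cells l" by (simp add: unicone_cells_def)
    then show ?thesis using edge_htpy_cell[of c] c by simp
  qed
  with assms show ?thesis by (simp add: word_htpy_def)
qed (simp add: word_htpy_refl)

lemma closed_path_null_htpy:
  assumes relators: "\<And>w. fp_word S I P w \<Longrightarrow> fp_eval G w = \<one> \<Longrightarrow> word_htpy C w []"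
    and p: "edge_path V adj p" "hd p = last p"
  shows "edge_htpy adj C p [hd p]"
proof -
  have loop_Inl: "edge_htpy adj C q [Inl g]"
    if "q \<noteq> []" "successively adj q" "hd q = Inl g" "last q = Inl g" "g \<in> carrier G" for q g
    using path_word_loop[OF that] relators[of "path_word q"] that(5)
    by (metis word_htpy_def word_path.simps(1))
  obtain v rest where p_def: "p = v # rest" and sp: "successively adj p" and pV: "set p \<subseteq> V"
    using p(1) unfolding edge_path_iff_successively by (cases p) auto
  consider (trivial) "rest = []" | (group) g where "v = Inl g" | (cone) A where "v = Inr A" "rest \<noteq> []"
    by (cases v) auto
  then show ?thesis
  proof cases
    case trivial
    then show ?thesis using p_def by simp
  next
    case (group g)
    then show ?thesis using loop_Inl[of p g] sp pV p(2) p_def by auto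
  next
    case cone
    then have a: "adj v (hd rest)" and rest: "successively adj rest" "last rest = v"
      using sp p(2) p_def by (auto simp: successively_Cons)
    then obtain g where g: "hd rest = Inl g" using cone by (cases "hd rest") auto
    then have "g \<in> carrier G" using adj_in_V[OF a] by simp
    have rest_g: "rest = Inl g # tl rest" using cone g by (cases rest) auto
    with rest(2) cone have "tl rest \<noteq> []" by (metis last_ConsL sum.distinct(1))
    then obtain c where c: "rest = Inl g # c @ [v]"
      using rest(2) rest_g by (metis append_butlast_last_id last_ConsR)
    have "successively adj (Inl g # c @ [v, Inl g])"
      using rest(1) a g c successively_append_iff[of adj "Inl g # c @ [v]" "[Inl g]"] by simp
    then have "edge_htpy adj C (Inl g # c @ [v, Inl g]) [Inl g]"
      using loop_Inl[of "Inl g # c @ [v, Inl g]" g] \<open>g \<in> carrier G\<close> by simp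
    with a g have "edge_htpy adj C (v # Inl g # c @ [v]) [v]"
      using edge_htpy_Cons_loop[of adj v "Inl g" C c] by simp
    then show ?thesis using p_def c by simp
  qed
qed

section \<open>Unicone cells reduce to simple cells\<close>

definition simple_cells :: "nat \<Rightarrow> ('a, 'i) vertex list set" where
  "simple_cells l = {c \<in> cells l. isl (hd c) \<and> count_Inr c \<le> 1}"

lemma cells_iff: "c \<in> cells l \<longleftrightarrow> c \<noteq> [] \<and> successively adj (c @ [hd c]) \<and> unicone c \<and> length c < l"
  unfolding unicone_cells_def edge_loop_iff_successively by auto

lemma cells_rotate:
  assumes "a # y \<in> cells l" "y \<noteq> []"
  shows "y @ [a] \<in> cells l"
  using assms unicone_subset[of "a # y" "y @ [a]"]
  by (auto simp: cells_iff successively_append_iff successively_Cons)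

lemma cells_Inr_Cons:
  assumes "\<not> isl a" "a # y \<in> cells l"
  shows "y \<noteq> [] \<and> isl (hd y)"
proof -
  have "successively adj (a # y @ [a])" using assms(2) by (simp add: cells_iff)
  moreover have "\<not> adj a a" using assms(1) by (cases a) auto
  ultimately have "y \<noteq> []" by auto
  with \<open>successively adj (a # y @ [a])\<close> have "adj a (hd y)" by (cases y) auto
  with assms(1) show ?thesis using \<open>y \<noteq> []\<close> by (cases a; cases "hd y") auto
qed

lemma cells_loop:
  assumes "x @ [a] @ y @ [a] @ z \<in> cells l"
  shows "a # y \<in> cells l"
proof -
  have "successively adj (x @ (a # y @ [a]) @ (z @ [hd (x @ [a] @ y @ [a] @ z)]))"
    using assms by (simp add: cells_iff)
  then have "successively adj (a # y @ [a])" by (metis successively_append_iff)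
  with assms show ?thesis
    using unicone_subset[of "x @ [a] @ y @ [a] @ z" "a # y"] by (auto simp: cells_iff)
qed

lemma cells_drop_loop:
  assumes "x @ [a] @ y @ [a] @ z \<in> cells l" "x \<noteq> []"
  shows "x @ [a] @ z \<in> cells l"
proof -
  have "successively adj (x @ [a] @ y @ [a] @ (z @ [hd x]))"
    using assms by (simp add: cells_iff)
  then have "successively adj (x @ [a] @ z @ [hd x])" by (rule successively_drop_cycle)
  with assms show ?thesis
    using unicone_subset[of "x @ [a] @ y @ [a] @ z" "x @ [a] @ z"] by (auto simp: cells_iff)
qed

lemma edge_htpy_cone_loop:
  assumes "\<not> isl a" "a # y \<in> cells l" "edge_htpy adj C (y @ [a] @ [hd y]) [hd y]"
  shows "edge_htpy adj C (a # y @ [a]) [a]"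
proof -
  obtain h y' where y: "y = h # y'" using cells_Inr_Cons[OF assms(1,2)] by (cases y) auto
  have "adj a h" using assms(2) y by (simp add: cells_iff)
  then show ?thesis using edge_htpy_Cons_loop[of adj a h C y'] assms(3) y by simp
qed

(* A cell visiting its cone vertex a twice, as x a y a z, splits into the shorter cell x a z
   and the loop a y a, whose rotation y a is a shorter cell starting at a group vertex. *)
lemma edge_htpy_cell_Inl:
  "c \<in> cells l \<Longrightarrow> isl (hd c) \<Longrightarrow> edge_htpy adj (simple_cells l) (c @ [hd c]) [hd c]"
proof (induction "length c" arbitrary: c rule: less_induct)
  case less
  show ?case
  proof (cases "count_Inr c \<le> 1")
    case True
    with less.prems show ?thesis
      using edge_htpy_cell[of c "simple_cells l"] by (simp add: simple_cells_def cells_iff)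
  next
    case False
    then have "count_Inr c \<ge> 2" by simp
    then obtain x a y b z where c: "c = x @ [a] @ y @ [b] @ z" "\<not> isl a" "\<not> isl b" "\<forall>v \<in> set x. isl v"
      by (rule count_Inr_ge_2_split)
    have "unicone c" using less.prems(1) by (simp add: cells_iff)
    then have "a = b" using unicone_Inr_eq[of c a b] c by simp
    have "x \<noteq> []" using c less.prems(2) by (cases x) auto
    then have hd_c: "hd c = hd x" using c by simp
    have loop: "a # y \<in> cells l" using cells_loop less.prems(1) c \<open>a = b\<close> by simp
    then have y: "y \<noteq> []" "isl (hd y)" using cells_Inr_Cons c(2) by blast+
    have "edge_htpy adj (simple_cells l) ((y @ [a]) @ [hd y]) [hd y]"
      using less.hyps[of "y @ [a]"] cells_rotate[OF loop y(1)] y c \<open>x \<noteq> []\<close> by simp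
    then have cone: "edge_htpy adj (simple_cells l) (a # y @ [a]) [a]"
      using edge_htpy_cone_loop[OF c(2) loop] by simp
    have rest: "x @ [a] @ z \<in> cells l"
      using cells_drop_loop less.prems(1) c \<open>a = b\<close> \<open>x \<noteq> []\<close> by simp
    have "c @ [hd c] = x @ (a # y @ [a]) @ (z @ [hd c])" using c \<open>a = b\<close> by simp
    also have "edge_htpy adj (simple_cells l) \<dots> (x @ [a] @ (z @ [hd c]))"
      by (rule edge_htpy_append_both[OF cone])
    also have "x @ [a] @ (z @ [hd c]) = (x @ [a] @ z) @ [hd (x @ [a] @ z)]"
      using hd_c \<open>x \<noteq> []\<close> by simp
    also have "edge_htpy adj (simple_cells l) \<dots> [hd (x @ [a] @ z)]"
      using less.hyps[OF _ rest] c less.prems(2) hd_c \<open>x \<noteq> []\<close> by simp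
    finally show ?thesis using hd_c \<open>x \<noteq> []\<close> by simp
  qed
qed

lemma edge_htpy_cell_simple: "c \<in> cells l \<Longrightarrow> edge_htpy adj (simple_cells l) (c @ [hd c]) [hd c]"
proof (cases "isl (hd c)")
  case False
  assume c: "c \<in> cells l"
  then obtain a y where a: "c = a # y" by (cases c) (auto simp: cells_iff)
  with c False have y: "y \<noteq> []" "isl (hd y)" using cells_Inr_Cons by auto
  then have "edge_htpy adj (simple_cells l) ((y @ [a]) @ [hd y]) [hd y]"
    using edge_htpy_cell_Inl[OF cells_rotate] c a by simp
  with False c a show ?thesis using edge_htpy_cone_loop[of a y l] by simp
qed (rule edge_htpy_cell_Inl)

lemma edge_htpy_simple_cells: "edge_htpy adj (cells l) p q \<Longrightarrow> edge_htpy adj (simple_cells l) p q"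
  unfolding edge_htpy_def
proof (rule rtranclp_symclp_lift[where f=id, simplified])
  fix x y assume "htpy_step adj (cells l) x y"
  then show "(symclp (htpy_step adj (simple_cells l)))\<^sup>*\<^sup>* x y"
  proof cases
    case (backtrack a b u v)
    then show ?thesis using edge_htpy_append_both[OF edge_htpy_backtrack] by (simp add: edge_htpy_def)
  next
    case (cell c u v)
    then show ?thesis
      using edge_htpy_append_both[OF edge_htpy_sym[OF edge_htpy_cell_simple], of c l u v]
      by (simp add: edge_htpy_def)
  qed
qed

end

section \<open>Spelling in the generators\<close>

locale generated_group_pair = group_pair G I P S
  for G :: "('a, 'b) monoid_scheme" (structure) and I :: "'i set" and P S +
  assumes finite_S: "finite S" and generate_S: "generate G S = carrier G"
begin

definition cayley_word :: "('a, 'i) fp_letter list \<Rightarrow> bool" where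
  "cayley_word w \<longleftrightarrow> fp_word S I P w \<and> count_Inr w = 0"

lemma generate_cayley_word: "g \<in> generate G S \<Longrightarrow> \<exists>w. cayley_word w \<and> fp_eval G w = g"
proof (induction rule: generate.induct)
  case one
  then show ?case by (intro exI[of _ "[]"]) (simp add: cayley_word_def)
next
  case (incl h)
  then show ?case using S_carrier by (intro exI[of _ "[Inl (h, True)]"]) (auto simp: cayley_word_def)
next
  case (inv h)
  then show ?case using S_carrier by (intro exI[of _ "[Inl (h, False)]"]) (auto simp: cayley_word_def)
next
  case (eng h1 h2)
  then obtain w1 w2 where "cayley_word w1" "fp_eval G w1 = h1" "cayley_word w2" "fp_eval G w2 = h2"
    by blast
  then show ?case
    by (intro exI[of _ "w1 @ w2"]) (simp add: fp_eval_append cayley_word_def S_word_carrier)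
qed

definition spelling :: "'a \<Rightarrow> ('a, 'i) fp_letter list" where
  "spelling g = (SOME w. cayley_word w \<and> fp_eval G w = g)"

lemma spelling: "g \<in> carrier G \<Longrightarrow> cayley_word (spelling g) \<and> fp_eval G (spelling g) = g"
  unfolding spelling_def using generate_cayley_word[of g] generate_S
  by (metis (mono_tags, lifting) someI_ex)

lemma coned_graph_connected:
  assumes "u \<in> V" "v \<in> V"
  shows "\<exists>p. edge_path V adj p \<and> hd p = u \<and> last p = v"
proof -
  have from_one: "\<exists>p. p \<noteq> [] \<and> set p \<subseteq> V \<and> successively adj p \<and> hd p = Inl \<one> \<and> last p = v"
    if "v \<in> V" for v
  proof -
    obtain g where g: "g \<in> carrier G" and "v = Inl g \<or> adj (Inl g) v"
      using \<open>v \<in> V\<close> lcos_self[OF _ subgroup_P]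
      by (cases v) (auto simp: coned_V_Inr adj_Inl_Inr)
    moreover
    have w: "cayley_word (spelling g)" "fp_eval G (spelling g) = g" using spelling[OF g] by auto
    then have "last (word_path \<one> (spelling g)) = Inl g"
      using last_word_path[OF one_closed] g by (simp add: cayley_word_def S_word_carrier)
    moreover have "successively adj (word_path \<one> (spelling g)) \<and> set (word_path \<one> (spelling g)) \<subseteq> V"
      using word_path_in_graph w(1) by (simp add: cayley_word_def)
    ultimately show ?thesis using that
      by (intro exI[of _ "if v = Inl g then word_path \<one> (spelling g)
                           else word_path \<one> (spelling g) @ [v]"])
         (auto simp: successively_append_iff)
  qed
  obtain pu where pu: "pu \<noteq> []" "set pu \<subseteq> V" "successively adj pu" "hd pu = Inl \<one>" "last pu = u"
    using from_one[OF assms(1)] by blast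
  obtain pv where pv: "pv \<noteq> []" "set pv \<subseteq> V" "successively adj pv" "hd pv = Inl \<one>" "last pv = v"
    using from_one[OF assms(2)] by blast
  have "successively adj (rev pu)" using pu(3) by (simp add: successively_mono adj_sym)
  then have "successively adj (rev pu @ tl pv)"
    using pu pv by (cases pv) (auto simp: successively_append_iff successively_Cons last_rev)
  moreover have "last (rev pu @ tl pv) = v" using pu pv by (cases pv) (auto simp: last_rev)
  ultimately show ?thesis using pu pv
    by (intro exI[of _ "rev pu @ tl pv"])
       (auto simp: edge_path_iff_successively hd_rev dest: list.set_sel(2))
qed

(* Spelling every subgroup letter in S turns a word into the label of a path in the Cayley
   graph, avoiding the cone vertices. *)
fun cayley_letter_subst :: "('a, 'i) fp_letter \<Rightarrow> ('a, 'i) fp_letter list" where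
  "cayley_letter_subst (Inl x) = [Inl x]"
| "cayley_letter_subst (Inr (i, p)) = spelling p"

definition cayley_subst :: "('a, 'i) fp_letter list \<Rightarrow> ('a, 'i) fp_letter list" where
  "cayley_subst w = concat (map cayley_letter_subst w)"

lemma cayley_letter_subst:
  assumes "fp_word S I P [x]"
  shows "cayley_word (cayley_letter_subst x) \<and> fp_eval G (cayley_letter_subst x) = fp_letter_val G x"
proof (cases x rule: fp_letter_cases)
  case (gen s b)
  with assms S_carrier show ?thesis by (auto simp: cayley_word_def)
next
  case (factor i p)
  with assms spelling[of p] P_carrier show ?thesis by auto
qed

lemma cayley_word_concat_map:
  "(\<And>x. x \<in> set w \<Longrightarrow> cayley_word (f x)) \<Longrightarrow> cayley_word (concat (map f w))"
  by (induction w) (auto simp: cayley_word_def)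

lemma cayley_subst:
  assumes "fp_word S I P w"
  shows "cayley_word (cayley_subst w) \<and> fp_eval G (cayley_subst w) = fp_eval G w"
proof -
  have "cayley_word (cayley_letter_subst x) \<and> fp_eval G (cayley_letter_subst x) = fp_letter_val G x"
    if "x \<in> set w" for x using assms that by (intro cayley_letter_subst) (simp add: fp_word_def)
  then show ?thesis unfolding cayley_subst_def
    using cayley_word_concat_map[of w cayley_letter_subst] fp_eval_concat_map[of w cayley_letter_subst]
    by (auto simp: cayley_word_def S_word_carrier)
qed

end

section \<open>A finite relative presentation gives coarse simple connectivity\<close>

locale relative_presentation = generated_group_pair G I P S
  for G :: "('a, 'b) monoid_scheme" (structure) and I :: "'i set" and P S +
  fixes S' :: "'a set" and R :: "('a, 'i) fp_letter list set"
  assumes S'_carrier: "S' \<subseteq> carrier G"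
    and S'_spans: "\<And>g. g \<in> carrier G \<Longrightarrow> \<exists>w. fp_word S' I P w \<and> fp_eval G w = g"
    and finite_R: "finite R" and R_words: "\<And>r. r \<in> R \<Longrightarrow> fp_word S' I P r"
    and kernel_R: "\<And>w. fp_word S' I P w \<Longrightarrow> fp_eval G w = \<one> \<longleftrightarrow> w \<in> fp_normal_closure G S' I P R"
begin

definition pres_spelling :: "'a \<Rightarrow> ('a, 'i) fp_letter list" where
  "pres_spelling g = (SOME w. fp_word S' I P w \<and> fp_eval G w = g)"

lemma pres_spelling: "g \<in> carrier G \<Longrightarrow> fp_word S' I P (pres_spelling g) \<and> fp_eval G (pres_spelling g) = g"
  unfolding pres_spelling_def using S'_spans[of g] by (metis (mono_tags, lifting) someI_ex)

fun gen_letter_subst :: "('a, 'i) fp_letter \<Rightarrow> ('a, 'i) fp_letter list" where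
  "gen_letter_subst (Inl (s, b)) = (if b then spelling s else fp_word_inv G (spelling s))"
| "gen_letter_subst (Inr x) = [Inr x]"

fun pres_letter_subst :: "('a, 'i) fp_letter \<Rightarrow> ('a, 'i) fp_letter list" where
  "pres_letter_subst (Inl (s, b)) = (if b then pres_spelling s else fp_word_inv G (pres_spelling s))"
| "pres_letter_subst (Inr x) = [Inr x]"

definition gen_subst :: "('a, 'i) fp_letter list \<Rightarrow> ('a, 'i) fp_letter list" where
  "gen_subst w = concat (map gen_letter_subst w)"

definition pres_subst :: "('a, 'i) fp_letter list \<Rightarrow> ('a, 'i) fp_letter list" where
  "pres_subst w = concat (map pres_letter_subst w)"

lemma gen_subst_simps [simp]:
  "gen_subst [] = []" "gen_subst (x # w) = gen_letter_subst x @ gen_subst w"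
  "gen_subst (u @ w) = gen_subst u @ gen_subst w"
  by (simp_all add: gen_subst_def)

lemma pres_subst_simps [simp]:
  "pres_subst [] = []" "pres_subst (x # w) = pres_letter_subst x @ pres_subst w"
  "pres_subst (u @ w) = pres_subst u @ pres_subst w"
  by (simp_all add: pres_subst_def)

lemma gen_letter_subst:
  assumes "fp_word S' I P [x]"
  shows "fp_word S I P (gen_letter_subst x) \<and> fp_eval G (gen_letter_subst x) = fp_letter_val G x"
proof (cases x rule: fp_letter_cases)
  case (gen s b)
  then have "s \<in> carrier G" using assms S'_carrier by auto
  with gen spelling[of s] show ?thesis
    by (auto simp: cayley_word_def fp_word_word_inv fp_eval_word_inv S_word_carrier)
qed (use assms P_carrier in auto)

lemma pres_letter_subst:
  assumes "fp_word S I P [x]"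
  shows "fp_word S' I P (pres_letter_subst x) \<and> fp_eval G (pres_letter_subst x) = fp_letter_val G x"
proof (cases x rule: fp_letter_cases)
  case (gen s b)
  then have "s \<in> carrier G" using assms S_carrier by auto
  with gen pres_spelling[of s] carrier_wordI[OF _ S'_carrier] show ?thesis
    by (auto simp: fp_word_word_inv fp_eval_word_inv)
qed (use assms P_carrier in auto)

lemma gen_subst:
  assumes "fp_word S' I P w"
  shows "fp_word S I P (gen_subst w) \<and> fp_eval G (gen_subst w) = fp_eval G w"
proof -
  have "fp_word S I P (gen_letter_subst x) \<and> fp_eval G (gen_letter_subst x) = fp_letter_val G x"
    if "x \<in> set w" for x using assms that by (intro gen_letter_subst) (simp add: fp_word_def)
  then show ?thesis unfolding gen_subst_def
    by (auto simp: S_word_carrier intro!: fp_word_concat_map fp_eval_concat_map)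
qed

lemma pres_subst:
  assumes "fp_word S I P w"
  shows "fp_word S' I P (pres_subst w) \<and> fp_eval G (pres_subst w) = fp_eval G w"
proof -
  have "fp_word S' I P (pres_letter_subst x) \<and> fp_eval G (pres_letter_subst x) = fp_letter_val G x"
    if "x \<in> set w" for x using assms that by (intro pres_letter_subst) (simp add: fp_word_def)
  then show ?thesis unfolding pres_subst_def using carrier_wordI[OF _ S'_carrier]
    by (auto intro!: fp_word_concat_map fp_eval_concat_map)
qed

lemma gen_subst_word_inv: "fp_word S' I P w \<Longrightarrow> gen_subst (fp_word_inv G w) = fp_word_inv G (gen_subst w)"
proof (induction w)
  case (Cons x w)
  then have x: "fp_word S' I P [x]" and w: "fp_word S' I P w" using fp_word_Cons by blast+
  have "gen_letter_subst (fp_letter_inv G x) = fp_word_inv G (gen_letter_subst x)"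
    using x spelling S'_carrier
    by (cases x rule: fp_letter_cases) (auto simp: cayley_word_def S_word_carrier)
  with Cons.IH[OF w] show ?case by simp
qed simp

lemma R_eval:
  assumes "r \<in> R"
  shows "fp_eval G r = \<one>"
proof -
  have "[] @ r @ fp_word_inv G [] @ [] \<in> fp_normal_closure G S' I P R"
    by (rule fp_normal_closure.conj[OF fp_normal_closure.empty assms]) simp
  then show ?thesis using kernel_R[OF R_words[OF assms]] by simp
qed

lemma word_htpy_fp_step:
  assumes "fp_step G u v" "fp_word S' I P u"
  shows "word_htpy C (gen_subst u) (gen_subst v)"
  using assms(1)
proof cases
  case (cancel x s b y)
  with assms(2) have x: "fp_word S' I P x" "fp_word S' I P y" and "s \<in> carrier G"
    using S'_carrier by auto
  define q where "q = gen_letter_subst (Inl (s, b))"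
  have q: "fp_word S I P q" using gen_letter_subst[of "Inl (s, b)"] cancel assms(2) q_def by simp
  have "gen_letter_subst (Inl (s, \<not> b)) = fp_word_inv G q"
    using \<open>s \<in> carrier G\<close> spelling[of s] unfolding q_def
    by (auto simp: cayley_word_def S_word_carrier)
  then have "gen_subst u = gen_subst x @ (q @ fp_word_inv G q) @ gen_subst y"
    using cancel q_def by simp
  also have "word_htpy C \<dots> (gen_subst x @ [] @ gen_subst y)"
    using gen_subst x q by (intro word_htpy_append word_htpy_refl word_htpy_cancel) auto
  finally show ?thesis using cancel by simp
next
  case (merge x i p q y)
  with assms(2) have "fp_word S' I P x" "fp_word S' I P y" "i \<in> I" "p \<in> P i" "q \<in> P i" by auto
  then have "word_htpy C (gen_subst x @ [Inr (i, p), Inr (i, q)] @ gen_subst y)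
                         (gen_subst x @ [Inr (i, p \<otimes> q)] @ gen_subst y)"
    using gen_subst by (intro word_htpy_append word_htpy_refl word_htpy_merge) auto
  then show ?thesis using merge by simp
next
  case (unit x i y)
  with assms(2) have "fp_word S' I P x" "fp_word S' I P y" "i \<in> I" by auto
  then have "word_htpy C (gen_subst x @ [Inr (i, \<one>)] @ gen_subst y) (gen_subst x @ [] @ gen_subst y)"
    using gen_subst by (intro word_htpy_append word_htpy_refl word_htpy_unit) auto
  then show ?thesis using unit by simp
qed

lemma word_htpy_fp_equiv:
  assumes "fp_equiv G S' I P u v" "fp_word S' I P u"
  shows "word_htpy C (gen_subst u) (gen_subst v)"
  using assms unfolding fp_equiv_def
proof (induction rule: rtranclp_induct)
  case base
  then show ?case using gen_subst word_htpy_refl by blast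
next
  case (step v w)
  from step(2) have "word_htpy C (gen_subst v) (gen_subst w)"
    by (auto elim!: symclpE intro: word_htpy_fp_step word_htpy_sym)
  with step show ?case using word_htpy_trans by blast
qed

(* The loops to be filled are the relators of R rewritten over S, and the words obtained by
   translating a generator in S to S' and back.  Spelled in the Cayley graph, they and the
   spellings of their subgroup letters have length at most cayley_bound, which bounds the size
   of the cells. *)
definition relator_words :: "('a, 'i) fp_letter list set" where
  "relator_words = gen_subst ` R \<union> (\<lambda>sb. gen_subst (pres_letter_subst (Inl sb))) ` (S \<times> UNIV)"

definition relator_letters :: "('a, 'i) fp_letter set" where
  "relator_letters = (\<Union>w \<in> relator_words. set w)"

definition cayley_bound :: nat where
  "cayley_bound = Max ({0} \<union> (\<lambda>w. length (cayley_subst w)) ` relator_words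
                        \<union> (\<lambda>x. length (cayley_letter_subst x)) ` relator_letters)"

abbreviation "bounded_cells \<equiv> cells (cayley_bound + 3)"

lemma finite_relator_words: "finite relator_words"
  unfolding relator_words_def using finite_R finite_S by auto

lemma relator_words_fp_word: "w \<in> relator_words \<Longrightarrow> fp_word S I P w"
proof -
  have "fp_word S I P (gen_subst (pres_letter_subst (Inl (s, b))))" if "s \<in> S" for s b
    using that gen_subst pres_letter_subst[of "Inl (s, b)"] by (metis fp_word_simps(1,2))
  then show "w \<in> relator_words \<Longrightarrow> fp_word S I P w"
    unfolding relator_words_def using gen_subst R_words by blast
qed

lemma relator_letters_fp_word: "x \<in> relator_letters \<Longrightarrow> fp_word S I P [x]"
  unfolding relator_letters_def using relator_words_fp_word by (auto simp: fp_word_def)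

lemma length_cayley_subst_le: "w \<in> relator_words \<Longrightarrow> length (cayley_subst w) \<le> cayley_bound"
  unfolding cayley_bound_def relator_letters_def using finite_relator_words by (intro Max_ge) auto

lemma length_cayley_letter_subst_le: "x \<in> relator_letters \<Longrightarrow> length (cayley_letter_subst x) \<le> cayley_bound"
  unfolding cayley_bound_def relator_letters_def using finite_relator_words by (intro Max_ge) auto

lemma word_htpy_cayley_letter_subst:
  assumes "x \<in> relator_letters"
  shows "word_htpy bounded_cells [x] (cayley_letter_subst x)"
proof (cases x rule: fp_letter_cases)
  case (gen s b)
  then show ?thesis using relator_letters_fp_word[OF assms] word_htpy_refl by simp
next
  case (factor i p)
  then have ip: "i \<in> I" "p \<in> P i" "p \<in> carrier G" using relator_letters_fp_word[OF assms] P_carrier by auto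
  have sp: "cayley_word (spelling p)" "fp_eval G (spelling p) = p" using spelling[OF ip(3)] by auto
  have "word_htpy bounded_cells ([Inr (i, inv p)] @ spelling p) []"
  proof (rule word_htpy_short_relator)
    show "length ([Inr (i, inv p)] @ spelling p) + count_Inr ([Inr (i, inv p)] @ spelling p)
        < cayley_bound + 3"
      using length_cayley_letter_subst_le[OF assms] factor sp by (simp add: cayley_word_def)
  qed (use ip sp P_inv in \<open>auto simp: cayley_word_def S_word_carrier\<close>)
  with factor ip show ?thesis
    by (auto intro: word_htpy_swap simp: fp_word_def)
qed

lemma word_htpy_relator_word:
  assumes "w \<in> relator_words" "fp_eval G w = \<one>"
  shows "word_htpy bounded_cells w []"
proof -
  have w: "fp_word S I P w" using relator_words_fp_word[OF assms(1)] .
  have "word_htpy bounded_cells w (cayley_subst w)"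
    unfolding cayley_subst_def using assms(1)
    by (intro word_htpy_concat_map word_htpy_cayley_letter_subst) (auto simp: relator_letters_def)
  also have "word_htpy bounded_cells (cayley_subst w) []"
    using cayley_subst[OF w] assms(2) length_cayley_subst_le[OF assms(1)]
    by (intro word_htpy_short_relator) (auto simp: cayley_word_def)
  finally show ?thesis .
qed

lemma word_htpy_pres_letter_subst:
  assumes "fp_word S I P [a]"
  shows "word_htpy bounded_cells [a] (gen_subst (pres_letter_subst a))"
proof (cases a rule: fp_letter_cases)
  case (gen s b)
  define y where "y = gen_subst (pres_letter_subst a)"
  have y: "y \<in> relator_words"
    unfolding y_def relator_words_def using gen assms by (intro UnI2 image_eqI[where x="(s, b)"]) auto
  have "fp_word S I P y" "fp_eval G y = fp_letter_val G a"
    using gen_subst pres_letter_subst[OF assms] unfolding y_def by auto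
  then have cy: "cayley_word (cayley_subst y)" "fp_eval G (cayley_subst y) = fp_letter_val G a"
    using cayley_subst by auto
  have "word_htpy bounded_cells (fp_word_inv G [a] @ cayley_subst y) []"
    using assms gen cy length_cayley_subst_le[OF y] S_carrier fp_word_word_inv[OF assms]
    by (intro word_htpy_short_relator)
       (auto simp: cayley_word_def fp_eval_append S_word_carrier fp_eval_word_inv)
  then have "word_htpy bounded_cells [a] (cayley_subst y)"
    using assms by (rule word_htpy_swap)
  moreover have "word_htpy bounded_cells y (cayley_subst y)"
    unfolding cayley_subst_def using y
    by (intro word_htpy_concat_map word_htpy_cayley_letter_subst) (auto simp: relator_letters_def)
  ultimately show ?thesis unfolding y_def using word_htpy_sym word_htpy_trans by blast
qed (use assms word_htpy_refl in auto)

lemma word_htpy_pres_subst: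
  assumes "fp_word S I P w"
  shows "word_htpy bounded_cells w (gen_subst (pres_subst w))"
proof -
  have "gen_subst (pres_subst w) = concat (map (\<lambda>x. gen_subst (pres_letter_subst x)) w)"
    by (induction w) auto
  then show ?thesis using assms
    by (auto intro!: word_htpy_concat_map word_htpy_pres_letter_subst simp: fp_word_def)
qed

lemma word_htpy_normal_closure:
  "w \<in> fp_normal_closure G S' I P R \<Longrightarrow> fp_word S' I P w \<and> word_htpy bounded_cells (gen_subst w) []"
proof (induction rule: fp_normal_closure.induct)
  case empty
  then show ?case by (simp add: word_htpy_refl)
next
  case (conj w r u)
  have "word_htpy bounded_cells (gen_subst r) []"
    using conj R_eval gen_subst R_words by (auto intro!: word_htpy_relator_word simp: relator_words_def)
  with conj show ?case
    using gen_subst R_words gen_subst_word_inv fp_word_word_inv by (simp add: word_htpy_conj)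
next
  case (conj_inv w r u)
  have "word_htpy bounded_cells (gen_subst r) []"
    using conj_inv R_eval gen_subst R_words by (auto intro!: word_htpy_relator_word simp: relator_words_def)
  with conj_inv show ?case
    using gen_subst R_words gen_subst_word_inv fp_word_word_inv
    by (simp add: word_htpy_conj word_htpy_word_inv)
next
  case (equiv w w')
  then show ?case
    using fp_equiv_fp_word word_htpy_fp_equiv word_htpy_sym word_htpy_trans by meson
qed

lemma word_htpy_relation:
  assumes "fp_word S I P w" "fp_eval G w = \<one>"
  shows "word_htpy bounded_cells w []"
proof -
  have "pres_subst w \<in> fp_normal_closure G S' I P R"
    using pres_subst[OF assms(1)] assms(2) kernel_R by auto
  then show ?thesis
    using word_htpy_pres_subst[OF assms(1)] word_htpy_normal_closure word_htpy_trans by blast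
qed

theorem bounded_cells_simply_connected: "complex_simply_connected V adj bounded_cells"
  unfolding complex_simply_connected_def
  using coned_graph_connected closed_path_null_htpy[OF word_htpy_relation]
  by (auto intro: coned_V_Inl[THEN iffD2, OF one_closed])

end

section \<open>Coarse simple connectivity gives a finite relative presentation\<close>

locale unicone_simply_connected = generated_group_pair G I P S
  for G :: "('a, 'b) monoid_scheme" (structure) and I :: "'i set" and P S +
  fixes l :: nat
  assumes finite_I: "finite I"
    and simply_connected: "complex_simply_connected V adj (cells l)"
begin

(* The words read off the loops of simple cells (fewer than l vertices) and of backtracks
   (three vertices) have length at most l + 2. *)
definition relators :: "('a, 'i) fp_letter list set" where
  "relators = {w. fp_word S I P w \<and> fp_eval G w = \<one> \<and> length w \<le> l + 2 \<and> count_Inr w \<le> 1}"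

lemma relators_fp_word: "r \<in> relators \<Longrightarrow> fp_word S I P r"
  by (simp add: relators_def)

lemma cayley_letters:
  assumes "fp_word S I P w" "count_Inr w = 0"
  shows "set w \<subseteq> Inl ` (S \<times> UNIV)"
proof
  fix x assume "x \<in> set w"
  with assms have "isl x" "fp_word S I P [x]" by (auto simp: count_Inr_eq_0_iff fp_word_def)
  then show "x \<in> Inl ` (S \<times> UNIV)" by (cases x rule: fp_letter_cases) auto
qed

lemma finite_relators: "finite relators"
proof -
  define gen_words :: "('a, 'i) fp_letter list set"
    where "gen_words = {w. set w \<subseteq> Inl ` (S \<times> (UNIV :: bool set)) \<and> length w \<le> l + 2}"
  define letters :: "('a, 'i) fp_letter set" where "letters = Inl ` (S \<times> UNIV) \<union>
    (\<lambda>(i, a, b). Inr (i, inv (fp_eval G a) \<otimes> inv (fp_eval G b))) ` (I \<times> gen_words \<times> gen_words)"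
  have "finite gen_words" unfolding gen_words_def using finite_S by (intro finite_lists_length_le) auto
  then have "finite letters" unfolding letters_def using finite_I finite_S by auto
  have "relators \<subseteq> {w. set w \<subseteq> letters \<and> length w \<le> l + 2}"
  proof safe
    fix w assume w: "w \<in> relators"
    then have w': "fp_word S I P w" "fp_eval G w = \<one>" "length w \<le> l + 2" "count_Inr w \<le> 1"
      by (auto simp: relators_def)
    show "length w \<le> l + 2" by (rule w'(3))
    show "x \<in> letters" if "x \<in> set w" for x
    proof (cases "count_Inr w = 0")
      case True
      with w' that show ?thesis using cayley_letters unfolding letters_def by blast
    next
      case False
      with w'(4) have "count_Inr w = 1" by simp
      then obtain a x' b where d: "w = a @ [x'] @ b" "\<not> isl x'" "count_Inr a = 0" "count_Inr b = 0"
        by (rule count_Inr_eq_1_split)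
      then obtain i p where x': "x' = Inr (i, p)" by (cases x' rule: fp_letter_cases) auto
      have ab: "fp_word S I P a" "fp_word S I P b" "i \<in> I" "p \<in> P i" using w'(1) d x' by auto
      have "p = inv (fp_eval G a) \<otimes> inv (fp_eval G b)"
        using fp_eval_eq_one_factor_letter[of a i p b] w'(1,2) d x' S_word_carrier by simp
      moreover have "a \<in> gen_words" "b \<in> gen_words"
        using cayley_letters ab d w'(3) unfolding gen_words_def by auto
      ultimately have "x' \<in> letters"
        unfolding letters_def using x' ab by (intro UnI2 image_eqI[where x="(i, a, b)"]) auto
      with that d show ?thesis using cayley_letters ab unfolding letters_def by auto
    qed
  qed
  moreover have "finite {w. set w \<subseteq> letters \<and> length w \<le> l + 2}"
    using \<open>finite letters\<close> by (rule finite_lists_length_le)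
  ultimately show ?thesis by (rule finite_subset)
qed

abbreviation "NC \<equiv> fp_normal_closure G S I P relators"

lemma normal_closure_fp_word: "w \<in> NC \<Longrightarrow> fp_word S I P w"
  by (induction rule: fp_normal_closure.induct)
     (auto simp: relators_fp_word fp_word_word_inv dest: fp_equiv_fp_word)

lemma normal_closure_fp_eval: "w \<in> NC \<Longrightarrow> fp_eval G w = \<one>"
proof (induction rule: fp_normal_closure.induct)
  case (conj w r u)
  then show ?case
    using normal_closure_fp_word fp_word_word_inv
    by (auto simp: relators_def fp_eval_append fp_eval_word_inv S_word_carrier)
next
  case (conj_inv w r u)
  then show ?case
    using normal_closure_fp_word fp_word_word_inv
    by (auto simp: relators_def fp_eval_append fp_eval_word_inv S_word_carrier)
next
  case (equiv w w')
  then show ?case using fp_equiv_fp_eval normal_closure_fp_word S_carrier by metis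
qed simp

(* Congruence modulo the normal closure NC, phrased through contexts because NC is only given
   as a closure under conjugation and equivalence in the free product. *)
definition rel_cong :: "('a, 'i) fp_letter list \<Rightarrow> ('a, 'i) fp_letter list \<Rightarrow> bool" where
  "rel_cong w w' \<longleftrightarrow> (\<forall>x y. fp_word S I P x \<longrightarrow> fp_word S I P y \<longrightarrow> (x @ w @ y \<in> NC \<longleftrightarrow> x @ w' @ y \<in> NC))"

lemma rel_cong_refl [simp]: "rel_cong w w"
  by (simp add: rel_cong_def)

lemma rel_cong_sym: "rel_cong w w' \<Longrightarrow> rel_cong w' w"
  by (simp add: rel_cong_def)

lemma rel_cong_trans [trans]: "rel_cong u v \<Longrightarrow> rel_cong v w \<Longrightarrow> rel_cong u w"
  by (simp add: rel_cong_def)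

lemma rtranclp_symclp_rel_cong: "(symclp rel_cong)\<^sup>*\<^sup>* x y \<Longrightarrow> rel_cong x y"
  by (induction rule: rtranclp_induct) (auto elim!: symclpE intro: rel_cong_trans rel_cong_sym)

lemma rel_cong_append_both:
  assumes "rel_cong w w'" "fp_word S I P a" "fp_word S I P b"
  shows "rel_cong (a @ w @ b) (a @ w' @ b)"
  unfolding rel_cong_def
proof (intro allI impI)
  fix x y assume "fp_word S I P x" "fp_word S I P y"
  with assms have "(x @ a) @ w @ (b @ y) \<in> NC \<longleftrightarrow> (x @ a) @ w' @ (b @ y) \<in> NC"
    using assms(1)[unfolded rel_cong_def, rule_format, of "x @ a" "b @ y"] by simp
  then show "x @ (a @ w @ b) @ y \<in> NC \<longleftrightarrow> x @ (a @ w' @ b) @ y \<in> NC" by simp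
qed

lemma rel_cong_fp_equiv: "fp_equiv G S I P w w' \<Longrightarrow> rel_cong w w'"
  unfolding rel_cong_def
  using fp_normal_closure.equiv fp_equiv_append_both fp_equiv_sym by metis

lemma rel_cong_relator:
  assumes r: "r \<in> relators"
  shows "rel_cong r []"
  unfolding rel_cong_def
proof (intro allI impI iffI)
  fix x y assume xy: "fp_word S I P x" "fp_word S I P y"
  have ri: "fp_word S I P r" "fp_word S I P (fp_word_inv G r)"
    using relators_fp_word[OF r] fp_word_word_inv by auto
  have xi: "fp_word S I P (fp_word_inv G x)" using xy fp_word_word_inv by auto
  have cancel_x: "fp_equiv G S I P (a @ (fp_word_inv G x @ x) @ b) (a @ [] @ b)"
    if "fp_word S I P a" "fp_word S I P b" for a b
    using that xy by (intro fp_equiv_append_both fp_equiv_cancel_left)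
  {
    assume "x @ r @ y \<in> NC"
    then have "x @ fp_word_inv G r @ fp_word_inv G x @ (x @ r @ y) \<in> NC"
      by (rule fp_normal_closure.conj_inv[OF _ r xy(1)])
    moreover have "fp_equiv G S I P ((x @ fp_word_inv G r) @ (fp_word_inv G x @ x) @ (r @ y))
        (x @ (fp_word_inv G r @ r) @ y)"
      using cancel_x[of "x @ fp_word_inv G r" "r @ y"] xy ri by simp
    moreover have "fp_equiv G S I P (x @ (fp_word_inv G r @ r) @ y) (x @ [] @ y)"
      using xy ri by (intro fp_equiv_append_both fp_equiv_cancel_left)
    ultimately show "x @ [] @ y \<in> NC"
      using fp_normal_closure.equiv fp_equiv_trans by fastforce
  next
    assume "x @ [] @ y \<in> NC"
    then have "x @ r @ fp_word_inv G x @ (x @ y) \<in> NC"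
      using fp_normal_closure.conj[OF _ r xy(1)] by simp
    moreover have "fp_equiv G S I P ((x @ r) @ (fp_word_inv G x @ x) @ y) ((x @ r) @ [] @ y)"
      using cancel_x[of "x @ r" y] xy ri by simp
    ultimately show "x @ r @ y \<in> NC"
      using fp_normal_closure.equiv by fastforce
  }
qed

lemma rel_cong_Nil_normal_closure: "rel_cong w [] \<Longrightarrow> w \<in> NC"
  unfolding rel_cong_def using fp_normal_closure.empty
  by (metis append_Nil append_Nil2 fp_word_simps(1))

lemma path_word_loop_relator:
  assumes "successively adj (Inl g # c @ [Inl g])" "count_Inr c \<le> 1" "length c \<le> l + 1"
  shows "path_word (Inl g # c @ [Inl g]) \<in> relators"
proof -
  let ?q = "Inl g # c @ [Inl g]"
  have "adj (Inl g) (hd (c @ [Inl g]))" using assms(1) by (simp add: successively_Cons)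
  then have "g \<in> carrier G" using adj_in_V by fastforce
  note q = path_word_loop[of ?q g, OF _ assms(1) _ _ this, simplified]
  have "length (path_word ?q) + count_Inr (path_word ?q) = Suc (length c)"
    using length_word_path[of g "path_word ?q"] q(2) by simp
  moreover have "count_Inr (path_word ?q) = count_Inr c"
    using count_Inr_word_path[of g "path_word ?q"] q(2) by simp
  ultimately show ?thesis using q(1,3) assms(2,3) by (simp add: relators_def)
qed

lemma rel_cong_insert_loop:
  assumes "group_path (u @ [Inl g] @ v)" "successively adj (Inl g # c @ [Inl g])"
    and "count_Inr c \<le> 1" "length c \<le> l + 1"
  shows "rel_cong (path_word (u @ [Inl g] @ v)) (path_word (u @ [Inl g] @ c @ [Inl g] @ v))"
proof -
  note split = group_path_split[OF assms(1)]
  have u: "successively adj (u @ [Inl g])" using split(1) by (simp add: group_path_def)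
  let ?W_u = "path_word (u @ [Inl g])" and ?W_v = "path_word (Inl g # v)"
  have "path_word ((Inl g # c) @ [Inl g] @ v) = path_word ((Inl g # c) @ [Inl g]) @ ?W_v"
    by (rule path_word_append) (use assms(2) in auto)
  then have "path_word (u @ [Inl g] @ c @ [Inl g] @ v) = ?W_u @ path_word (Inl g # c @ [Inl g]) @ ?W_v"
    using path_word_append[OF u split(3), of "c @ [Inl g] @ v"] by simp
  moreover have "path_word (u @ [Inl g] @ v) = ?W_u @ [] @ ?W_v"
    using path_word_append[OF u split(3), of v] by simp
  moreover have "rel_cong (?W_u @ [] @ ?W_v) (?W_u @ path_word (Inl g # c @ [Inl g]) @ ?W_v)"
    using rel_cong_sym[OF rel_cong_relator[OF path_word_loop_relator[OF assms(2-4)]]]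
      group_path_path_word[OF split(1)] group_path_path_word[OF split(2)]
    by (rule rel_cong_append_both)
  ultimately show ?thesis by simp
qed

lemma rel_cong_cone_backtrack:
  assumes "group_path (u @ [Inl x, Inr (i, A), Inl h, Inr (i, A), Inl y] @ v)"
  shows "rel_cong (path_word (u @ [Inl x, Inr (i, A), Inl h, Inr (i, A), Inl y] @ v))
                  (path_word (u @ [Inl x, Inr (i, A), Inl y] @ v))"
proof -
  have p: "group_path (u @ [Inl x] @ [Inr (i, A), Inl h, Inr (i, A), Inl y] @ v)" using assms by simp
  note split = group_path_split[OF p]
  have u: "successively adj (u @ [Inl x])" using split(1) by (simp add: group_path_def)
  have "adj (Inl x) (Inr (i, A))" "adj (Inr (i, A)) (Inl h)" "adj (Inr (i, A)) (Inl y)"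
    using split(2) by (auto simp: group_path_def successively_Cons)
  then have xhy: "x \<in> carrier G" "h \<in> carrier G" "y \<in> carrier G"
    by (auto simp: adj_Inl_Inr adj_Inr_Inl)
  let ?W_u = "path_word (u @ [Inl x])" and ?W_v = "path_word (Inl y # v)"
  have W: "path_word (u @ [Inl x, Inr (i, A), Inl h, Inr (i, A), Inl y] @ v)
      = ?W_u @ [Inr (i, inv x \<otimes> h), Inr (i, inv h \<otimes> y)] @ ?W_v"
    "path_word (u @ [Inl x, Inr (i, A), Inl y] @ v)
      = ?W_u @ [Inr (i, inv x \<otimes> h \<otimes> (inv h \<otimes> y))] @ ?W_v"
    using path_word_append[OF u split(3), of "[Inr (i, A), Inl h, Inr (i, A), Inl y] @ v"]
      path_word_append[OF u split(3), of "[Inr (i, A), Inl y] @ v"] xhy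
    by (simp_all add: m_assoc)
  have words: "fp_word S I P ?W_u" "fp_word S I P ?W_v"
    and ip: "i \<in> I" "inv x \<otimes> h \<in> P i" "inv h \<otimes> y \<in> P i"
    using group_path_path_word[OF assms] unfolding W(1) by auto
  have "fp_step G ([] @ [Inr (i, inv x \<otimes> h), Inr (i, inv h \<otimes> y)] @ [])
      ([] @ [Inr (i, inv x \<otimes> h \<otimes> (inv h \<otimes> y))] @ [])"
    by (rule fp_step.merge)
  then have "rel_cong [Inr (i, inv x \<otimes> h), Inr (i, inv h \<otimes> y)] [Inr (i, inv x \<otimes> h \<otimes> (inv h \<otimes> y))]"
    using ip P_mult by (intro rel_cong_fp_equiv fp_equiv_step) auto
  then show ?thesis unfolding W using words by (rule rel_cong_append_both)
qed

lemma htpy_step_group_path: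
  assumes "htpy_step adj (simple_cells l) p p'"
  shows "group_path p \<longleftrightarrow> group_path p'"
  using assms
proof cases
  case (backtrack a b u v)
  then have "successively adj p \<longleftrightarrow> successively adj p'"
    using successively_append_middle[of adj "u @ [a, b]" a v] successively_append_middle[of adj u a v]
    by (auto simp: successively_append_iff adj_sym)
  moreover have "hd p = hd p'" using backtrack by (cases u) auto
  moreover have "last p = last p'" using backtrack by (cases v) auto
  ultimately show ?thesis using backtrack by (simp add: group_path_def)
next
  case (cell c u v)
  then have "successively adj (c @ [hd c])" "c \<noteq> []" by (auto simp: simple_cells_def cells_iff)
  then have "successively adj p \<longleftrightarrow> successively adj p'"
    using cell successively_append_middle[of adj "u @ c" "hd c" v]
      successively_append_middle[of adj u "hd c" v]
      successively_append_middle[of adj u "hd c" "tl c @ [hd c]"]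
    by (cases c) auto
  moreover have "hd p = hd p'" using cell \<open>c \<noteq> []\<close> by (cases u) auto
  moreover have "last p = last p'" using cell \<open>c \<noteq> []\<close> by (cases v) auto
  ultimately show ?thesis using cell by (simp add: group_path_def)
qed

lemma htpy_step_rel_cong:
  assumes "htpy_step adj (simple_cells l) p p'" "group_path p"
  shows "rel_cong (path_word p) (path_word p')"
  using assms(1)
proof cases
  case (backtrack a b u v)
  show ?thesis
  proof (cases a)
    case (Inl g)
    have "group_path (u @ [Inl g] @ v)"
      using htpy_step_group_path[OF assms(1)] assms(2) backtrack Inl by simp
    moreover have "successively adj (Inl g # [b] @ [Inl g])" using backtrack Inl adj_sym by simp
    ultimately show ?thesis
      using rel_cong_sym[OF rel_cong_insert_loop[of u g v "[b]"]] backtrack Inl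
      by (cases b) auto
  next
    case (Inr iA)
    obtain i A where a: "a = Inr (i, A)" using Inr by (cases iA) auto
    have "u \<noteq> []" "v \<noteq> []" using assms(2) backtrack a by (auto simp: group_path_def)
    then obtain u' x0 y0 v' where uv: "u = u' @ [x0]" "v = y0 # v'"
      by (metis append_butlast_last_id list.exhaust)
    have s: "successively adj (u' @ [x0, a, b, a, y0] @ v')"
      using assms(2) backtrack uv by (simp add: group_path_def)
    then have "adj x0 a" "adj a y0" by (auto simp: successively_append_iff)
    then obtain x y h where "x0 = Inl x" "y0 = Inl y" "b = Inl h"
      using a backtrack(3) by (cases x0; cases y0; cases b) auto
    with rel_cong_cone_backtrack[of u' x i A h y v'] assms(2) backtrack a uv show ?thesis by simp
  qed
next
  case (cell c u v)
  then obtain g c' where c: "c = Inl g # c'" "successively adj (Inl g # c' @ [Inl g])"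
      "count_Inr c' \<le> 1" "length c' \<le> l + 1"
    by (cases c) (auto simp: simple_cells_def cells_iff elim!: islE)
  with rel_cong_insert_loop[of u g v c'] assms(2) cell show ?thesis by simp
qed

lemma edge_htpy_rel_cong:
  assumes "edge_htpy adj (simple_cells l) p q" "group_path p"
  shows "rel_cong (path_word p) (path_word q)"
proof -
  have "(symclp rel_cong)\<^sup>*\<^sup>* (path_word p) (path_word q) \<and> group_path q"
    using assms(1) unfolding edge_htpy_def
    by (intro rtranclp_symclp_lift_invariant[where Q=group_path, OF _ htpy_step_group_path _ assms(2)])
       (auto intro: htpy_step_rel_cong r_into_rtranclp symclpI1)
  then show ?thesis using rtranclp_symclp_rel_cong by blast
qed

lemma rel_cong_edge_letter:
  assumes "s \<in> S" "g \<in> carrier G"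
  shows "rel_cong [Inl (s, b)] [edge_letter g (g \<otimes> (if b then s else inv s))]"
proof -
  have s: "s \<in> carrier G" using assms S_carrier by auto
  have gs: "inv (g \<otimes> inv s) \<otimes> g = s" using s assms(2) by (simp add: inv_mult_group m_assoc)
  show ?thesis
  proof (cases "b \<or> inv s \<notin> S")
    case True
    then show ?thesis using s assms gs by (auto simp: edge_letter_def)
  next
    case False
    have r: "[Inl (s, True), Inl (inv s, True)] \<in> relators"
      using False s assms(1) by (simp add: relators_def)
    have "rel_cong ([Inl (s, False)] @ [] @ [])
        ([Inl (s, False)] @ [Inl (s, True), Inl (inv s, True)] @ [])"
      using rel_cong_sym[OF rel_cong_relator[OF r]] assms(1) by (intro rel_cong_append_both) auto
    also have "rel_cong \<dots> [Inl (inv s, True)]"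
      using fp_step.cancel[of G "[]" s False "[Inl (inv s, True)]"] False assms(1)
      by (intro rel_cong_fp_equiv fp_equiv_step) auto
    finally show ?thesis using False s assms(2) by (simp add: edge_letter_def)
  qed
qed

lemma rel_cong_path_word_word_path:
  "fp_word S I P w \<Longrightarrow> g \<in> carrier G \<Longrightarrow> rel_cong w (path_word (word_path g w))"
proof (induction g w rule: word_path.induct)
  case (2 g s b w)
  define g' where "g' = g \<otimes> (if b then s else inv s)"
  have "s \<in> carrier G" using 2 S_carrier by auto
  then have "g' \<in> carrier G" using 2 by (simp add: g'_def)
  obtain t where "word_path g' w = Inl g' # t" using word_path_Cons_tl by blast
  then have "path_word (word_path g (Inl (s, b) # w)) = edge_letter g g' # path_word (word_path g' w)"
    by (simp add: g'_def)
  moreover have "fp_word S I P (path_word (word_path g' w))"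
    using word_path_path_word[of "word_path g' w" g'] word_path_in_graph[of w g'] 2 \<open>g' \<in> carrier G\<close>
      last_word_path[of g' w] S_word_carrier by simp
  moreover have "rel_cong ([Inl (s, b)] @ w @ []) ([Inl (s, b)] @ path_word (word_path g' w) @ [])"
    using 2 \<open>g' \<in> carrier G\<close> by (intro rel_cong_append_both) (auto simp: g'_def)
  moreover have "rel_cong ([] @ [Inl (s, b)] @ path_word (word_path g' w))
      ([] @ [edge_letter g g'] @ path_word (word_path g' w))"
    using calculation 2 rel_cong_edge_letter by (intro rel_cong_append_both) (auto simp: g'_def)
  ultimately show ?case using rel_cong_trans by fastforce
next
  case (3 g i p w)
  then have "p \<in> carrier G" using P_carrier by auto
  with 3 have "g \<otimes> p \<in> carrier G" by simp
  then have "rel_cong ([Inr (i, p)] @ w @ []) ([Inr (i, p)] @ path_word (word_path (g \<otimes> p) w) @ [])"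
    using 3 by (intro rel_cong_append_both) auto
  moreover obtain t where "word_path (g \<otimes> p) w = Inl (g \<otimes> p) # t" using word_path_Cons_tl by blast
  then have "path_word (word_path g (Inr (i, p) # w)) = Inr (i, p) # path_word (word_path (g \<otimes> p) w)"
    using 3 \<open>p \<in> carrier G\<close> by simp
  ultimately show ?case by simp
qed simp

theorem relatively_finitely_presented: "rel_fin_presented G I P"
  unfolding rel_fin_presented_def
proof (intro exI conjI)
  show "\<forall>g \<in> carrier G. \<exists>w. fp_word S I P w \<and> fp_eval G w = g"
    using spelling by (auto simp: cayley_word_def)
  show "\<forall>w. fp_word S I P w \<longrightarrow> fp_eval G w = \<one> \<longleftrightarrow> w \<in> NC"
  proof (intro allI impI iffI)
    fix w assume w: "fp_word S I P w" "fp_eval G w = \<one>"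
    let ?p = "word_path \<one> w"
    have p: "successively adj ?p" "set ?p \<subseteq> V" "last ?p = Inl \<one>"
      using word_path_in_graph[OF w(1)] last_word_path[OF one_closed S_word_carrier[OF w(1)]] w(2)
      by auto
    then have "edge_path V adj ?p" "hd ?p = last ?p" by (auto simp: edge_path_iff_successively)
    with simply_connected have "edge_htpy adj (cells l) ?p [Inl \<one>]"
      unfolding complex_simply_connected_def by (metis hd_word_path)
    then have "rel_cong (path_word ?p) (path_word [Inl \<one>])"
      using p by (intro edge_htpy_rel_cong edge_htpy_simple_cells) (auto simp: group_path_def)
    then show "w \<in> NC"
      using rel_cong_path_word_word_path[OF w(1) one_closed] rel_cong_trans rel_cong_Nil_normal_closure
      by fastforce
  qed (rule normal_closure_fp_eval)
qed (use finite_S S_carrier finite_relators relators_fp_word in auto)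

end

theorem proposition4p11:
  fixes G :: "('a, 'b) monoid_scheme" and I :: "'i set" and P :: "'i \<Rightarrow> 'a set" and S :: "'a set"
  assumes "group G"
    and "finite I" and "I \<noteq> {}"
    and "\<forall>i \<in> I. subgroup (P i) G"
    and "finite S" and "S \<subseteq> carrier G" and "generate G S = carrier G"
  shows "rel_fin_presented G I P \<longleftrightarrow> coarsely_unicone_simply_connected G I P S"
proof
  have pair: "generated_group_pair G I P S"
    using assms by (intro generated_group_pair.intro group_pair.intro group_pair_axioms.intro
        generated_group_pair_axioms.intro) auto
  show "coarsely_unicone_simply_connected G I P S" if presented: "rel_fin_presented G I P"
  proof -
    obtain S' R where "S' \<subseteq> carrier G" "\<forall>g \<in> carrier G. \<exists>w. fp_word S' I P w \<and> fp_eval G w = g"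
      "finite R" "\<forall>r \<in> R. fp_word S' I P r"
      "\<forall>w. fp_word S' I P w \<longrightarrow> fp_eval G w = \<one>\<^bsub>G\<^esub> \<longleftrightarrow> w \<in> fp_normal_closure G S' I P R"
      using presented unfolding rel_fin_presented_def by blast
    then interpret relative_presentation G I P S S' R
      by (intro relative_presentation.intro[OF pair] relative_presentation_axioms.intro) auto
    show ?thesis
      unfolding coarsely_unicone_simply_connected_def using bounded_cells_simply_connected by blast
  qed
  show "rel_fin_presented G I P" if connected: "coarsely_unicone_simply_connected G I P S"
  proof -
    obtain l
      where "complex_simply_connected (coned_V G I P) (coned_adj G I P S) (unicone_cells G I P S l)"
      using connected unfolding coarsely_unicone_simply_connected_def by blast
    then interpret unicone_simply_connected G I P S l
      by (intro unicone_simply_connected.intro[OF pair] unicone_simply_connected_axioms.intro assms(2))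
    show ?thesis by (rule relatively_finitely_presented)
  qed
qed

end
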